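(* Let $d\le N$ be positive integers and let $X, X'\in \mathbb{Z}^{d\times N}$ be matrices of rank $d$ that represent the same arithmetic matroid $\mathcal{A}=(E,\operatorname{rk},m)$ on $E=[N]$, and suppose that $\mathcal{A}$ is weakly multiplicative. Then there exist a matrix $T\in \mathrm{GL}(d,\mathbb{Z})$ and a diagonal matrix $D\in\mathbb{Z}^{N\times N}$ with diagonal entries in $\{1,-1\}$ such that $X' = T X D$.
   Context: For $X\in\mathbb{Z}^{d\times N}$ with columns $x_1,\dots,x_N$, the arithmetic matroid $\mathcal{A}(X)=([N],\operatorname{rk},m)$ represented by $X$ consists of the rank function $\operatorname{rk}(S)=\dim \langle x_e : e\in S\rangle_{\mathbb{R}}$ and the multiplicity function $m(S)=\bigl|(\langle S\rangle_{\mathbb{R}}\cap\mathbb{Z}^d)/\langle S\rangle\bigr|$ for $S\subseteq[N]$, where $\langle S\rangle\subseteq\mathbb{Z}^d$ is the subgroup generated by $\{x_e: e\in S\}$ and $\langle S\rangle_{\mathbb{R}}$ is the real span of the same vectors. Two matrices represent the same arithmetic matroid if their rank functions and multiplicity functions on subsets of $[N]$ coincide. A basis of $\mathcal{A}$ is a basis of the underlying matroid $([N],\operatorname{rk})$. The arithmetic matroid is torsion-free if $m(\emptyset)=1$ (automatic here). A basis $B$ is multiplicative if $m(B)=\prod_{x\in B} m(\{x\})$; a torsion-free arithmetic matroid is weakly multiplicative if it has at least one multiplicative basis. *)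

theory Defs
  imports "HOL-Analysis.Analysis"
begin

text \<open>Integer matrices X :: int^'n^'d with d = CARD('d) rows and N = CARD('n) columns;
  the ground set E = [N] is the index type 'n, subsets S :: 'n set.\<close>

definition real_col :: "int^'n^'d \<Rightarrow> 'n \<Rightarrow> real^'d" where
  "real_col X e = (\<chi> i. real_of_int (X $ i $ e))"

definition am_rank :: "int^'n^'d \<Rightarrow> 'n set \<Rightarrow> nat" where
  "am_rank X S = dim (span (real_col X ` S))"

definition int_span_cols :: "int^'n^'d \<Rightarrow> 'n set \<Rightarrow> (int^'d) set" where
  "int_span_cols X S = {v. \<exists>c :: 'n \<Rightarrow> int. v = (\<Sum>e\<in>S. c e *s column e X)}"

definition saturation :: "int^'n^'d \<Rightarrow> 'n set \<Rightarrow> (int^'d) set" where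
  "saturation X S = {v :: int^'d. (\<chi> i. real_of_int (v $ i)) \<in> span (real_col X ` S)}"

definition am_mult :: "int^'n^'d \<Rightarrow> 'n set \<Rightarrow> nat" where
  "am_mult X S = card (saturation X S //
      {(v, w). v \<in> saturation X S \<and> w \<in> saturation X S \<and> v - w \<in> int_span_cols X S})"

definition same_arith_matroid :: "int^'n^'d \<Rightarrow> int^'n^'d \<Rightarrow> bool" where
  "same_arith_matroid X X' \<longleftrightarrow>
     (\<forall>S. am_rank X S = am_rank X' S \<and> am_mult X S = am_mult X' S)"

definition am_basis :: "int^'n^'d \<Rightarrow> 'n set \<Rightarrow> bool" where
  "am_basis X B \<longleftrightarrow> am_rank X B = card B \<and> am_rank X B = am_rank X UNIV"

definition multiplicative_basis :: "int^'n^'d \<Rightarrow> 'n set \<Rightarrow> bool" where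
  "multiplicative_basis X B \<longleftrightarrow> am_basis X B \<and> am_mult X B = (\<Prod>x\<in>B. am_mult X {x})"

definition torsion_free :: "int^'n^'d \<Rightarrow> bool" where
  "torsion_free X \<longleftrightarrow> am_mult X {} = 1"

definition weakly_multiplicative :: "int^'n^'d \<Rightarrow> bool" where
  "weakly_multiplicative X \<longleftrightarrow> torsion_free X \<and> (\<exists>B. multiplicative_basis X B)"

end

theory Submission
  imports Defs
begin

text \<open>
  Let \<open>B\<close> be a multiplicative basis. The multiplicity of a basis is \<open>|det X\<^sub>B|\<close>, the index of
  the lattice spanned by its columns (computed by reducing to triangular form with unimodular
  column operations), and the multiplicity of a single column is the gcd of its entries. So
  multiplicativity of \<open>B\<close> says that \<open>X\<^sub>B\<close> is a unimodular matrix times the diagonal matrix of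
  column contents, and after a change of coordinates in \<open>GL(d, \<int>)\<close> both \<open>X\<close> and \<open>X'\<close> agree with
  this diagonal matrix on the columns \<open>B\<close>. Expanding the determinants of all other bases, the
  multiplicities then determine every square minor of the normalised matrices up to sign.

  Finally, two matrices whose minors agree up to sign differ by sign changes of rows and columns.
  Adding one column at a time, the required signs are forced along the connected components of
  the bipartite graph of nonzero entries; an inconsistency along a shortest walk would close up
  to a chordless cycle, whose minor is a sum of two nonzero terms for one matrix and their
  difference for the other.
\<close>

section \<open>The index of an integer lattice\<close>

definition lattice :: "int^'n^'m \<Rightarrow> (int^'m) set" where
  "lattice M = range ((*v) M)"

definition lattice_cong :: "int^'n^'m \<Rightarrow> ((int^'m) \<times> (int^'m)) set" where
  "lattice_cong M = {(v, w). v - w \<in> lattice M}"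

lemma zero_in_lattice: "0 \<in> lattice M"
  unfolding lattice_def by (metis matrix_vector_mult_0_right rangeI)

lemma lattice_add: "v \<in> lattice M \<Longrightarrow> w \<in> lattice M \<Longrightarrow> v + w \<in> lattice M"
  unfolding lattice_def by (auto simp flip: matrix_vector_right_distrib)

lemma lattice_diff: "v \<in> lattice M \<Longrightarrow> w \<in> lattice M \<Longrightarrow> v - w \<in> lattice M"
  unfolding lattice_def by (auto simp flip: matrix_vector_mult_diff_distrib)

lemma equiv_lattice_cong: "equiv UNIV (lattice_cong M)"
proof (rule equivI)
  show "refl (lattice_cong M)"
    by (intro refl_onI) (auto simp: lattice_cong_def zero_in_lattice)
  show "sym (lattice_cong M)"
    unfolding sym_def lattice_cong_def using lattice_diff[OF zero_in_lattice] by fastforce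
  show "trans (lattice_cong M)"
    unfolding trans_def lattice_cong_def using lattice_add by fastforce
qed simp

lemma card_quotient_eq_card_reps:
  assumes E: "equiv A r" and RA: "R \<subseteq> A"
    and ex: "\<And>a. a \<in> A \<Longrightarrow> \<exists>x\<in>R. (a, x) \<in> r"
    and un: "\<And>x y. x \<in> R \<Longrightarrow> y \<in> R \<Longrightarrow> (x, y) \<in> r \<Longrightarrow> x = y"
  shows "card (A // r) = card R"
proof -
  have "A // r = (\<lambda>x. r `` {x}) ` R"
  proof (intro equalityI subsetI)
    fix X assume "X \<in> A // r"
    then obtain a where X: "a \<in> A" "X = r `` {a}" by (auto simp: quotient_def)
    obtain x where x: "x \<in> R" "(a, x) \<in> r" using ex[OF X(1)] by blast
    then show "X \<in> (\<lambda>x. r `` {x}) ` R" using X equiv_class_eq[OF E x(2)] by auto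
  qed (use RA in \<open>auto simp: quotient_def\<close>)
  moreover have "inj_on (\<lambda>x. r `` {x}) R"
    using un eq_equiv_class_iff[OF E] RA by (intro inj_onI) blast
  ultimately show ?thesis by (simp add: card_image)
qed

definition column_equivalent :: "int^'n^'n \<Rightarrow> int^'n^'n \<Rightarrow> bool" where
  "column_equivalent M M' \<longleftrightarrow> lattice M = lattice M' \<and> \<bar>det M\<bar> = \<bar>det M'\<bar>"

lemma column_equivalent_refl: "column_equivalent M M"
  by (simp add: column_equivalent_def)

lemma column_equivalent_trans:
  "column_equivalent M1 M2 \<Longrightarrow> column_equivalent M2 M3 \<Longrightarrow> column_equivalent M1 M3"
  by (simp add: column_equivalent_def)

definition add_column :: "'a::semiring_1^'n^'m \<Rightarrow> 'n \<Rightarrow> 'n \<Rightarrow> 'a \<Rightarrow> 'a^'n^'m" where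
  "add_column M j1 j2 q = (\<chi> i j. if j = j2 then M$i$j2 + q * M$i$j1 else M$i$j)"

definition swap_columns :: "'a^'n^'m \<Rightarrow> 'n \<Rightarrow> 'n \<Rightarrow> 'a^'n^'m" where
  "swap_columns M j1 j2 = (\<chi> i j. M$i$(Transposition.transpose j1 j2 j))"

lemma add_column_mult_vec:
  fixes M :: "'a::comm_semiring_1^'n^'m"
  shows "add_column M j1 j2 q *v c = M *v (\<chi> j. if j = j1 then c$j1 + q * c$j2 else c$j)"
proof -
  have "(\<Sum>j\<in>UNIV. (if j = j2 then M$i$j2 + q * M$i$j1 else M$i$j) * c$j)
      = (\<Sum>j\<in>UNIV. M$i$j * (if j = j1 then c$j1 + q * c$j2 else c$j))" for i
  proof -
    have "(\<Sum>j\<in>UNIV. (if j = j2 then M$i$j2 + q * M$i$j1 else M$i$j) * c$j)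
        = (\<Sum>j\<in>UNIV. M$i$j * c$j + (if j = j2 then q * M$i$j1 * c$j2 else 0))"
      by (intro sum.cong) (auto simp: algebra_simps)
    also have "\<dots> = (\<Sum>j\<in>UNIV. M$i$j * c$j + (if j = j1 then M$i$j1 * (q * c$j2) else 0))"
      by (simp add: sum.distrib mult.left_commute mult.assoc)
    also have "\<dots> = (\<Sum>j\<in>UNIV. M$i$j * (if j = j1 then c$j1 + q * c$j2 else c$j))"
      by (intro sum.cong) (auto simp: algebra_simps)
    finally show ?thesis .
  qed
  then show ?thesis by (simp add: add_column_def matrix_vector_mult_def vec_eq_iff)
qed

lemma add_column_cancel:
  fixes M :: "'a::ring_1^'n^'m"
  assumes "j1 \<noteq> j2"
  shows "add_column (add_column M j1 j2 q) j1 j2 (- q) = M"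
  using assms by (simp add: add_column_def vec_eq_iff)

lemma lattice_add_column_subset: "lattice (add_column M j1 j2 q) \<subseteq> lattice M"
  unfolding lattice_def add_column_mult_vec by auto

lemma lattice_add_column: "j1 \<noteq> j2 \<Longrightarrow> lattice (add_column M j1 j2 q) = lattice M"
  by (metis add_column_cancel lattice_add_column_subset subset_antisym)

lemma det_add_column:
  assumes "j1 \<noteq> j2"
  shows "det (add_column M j1 j2 q) = det M"
proof -
  have "transpose (add_column M j1 j2 q) = (\<chi> k. if k = j2
      then row j2 (transpose M) + q *s row j1 (transpose M) else row k (transpose M))"
    by (simp add: add_column_def transpose_def row_def vec_eq_iff)
  then show ?thesis
    using det_row_operation[of j2 j1 "transpose M" q] assms by (metis det_transpose)
qed

lemma column_equivalent_add_column:
  "j1 \<noteq> j2 \<Longrightarrow> column_equivalent M (add_column M j1 j2 q)"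
  by (simp add: column_equivalent_def det_add_column lattice_add_column)

lemma swap_columns_mult_vec:
  fixes M :: "'a::semiring_1^'n^'m"
  shows "swap_columns M j1 j2 *v c = M *v (\<chi> j. c $ Transposition.transpose j1 j2 j)"
proof -
  have "(\<Sum>j\<in>UNIV. M$i$(Transposition.transpose j1 j2 j) * c$j)
      = (\<Sum>j\<in>UNIV. M$i$j * c$(Transposition.transpose j1 j2 j))" for i
    by (rule sum.reindex_bij_witness[where i="Transposition.transpose j1 j2"
          and j="Transposition.transpose j1 j2"]) auto
  then show ?thesis by (simp add: swap_columns_def matrix_vector_mult_def vec_eq_iff)
qed

lemma lattice_swap_columns:
  fixes M :: "int^'n^'m"
  shows "lattice (swap_columns M j1 j2) = lattice M"
proof -
  have "lattice (swap_columns M j1 j2) \<subseteq> lattice M" for M :: "int^'n^'m"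
    unfolding lattice_def swap_columns_mult_vec by auto
  moreover have "swap_columns (swap_columns M j1 j2) j1 j2 = M"
    by (simp add: swap_columns_def vec_eq_iff)
  ultimately show ?thesis by (metis subset_antisym)
qed

lemma column_equivalent_swap_columns: "column_equivalent M (swap_columns M j1 j2)"
proof -
  have "Transposition.transpose j1 j2 permutes UNIV" by (rule permutes_swap_id) auto
  then have "det (swap_columns M j1 j2) = of_int (sign (Transposition.transpose j1 j2)) * det M"
    unfolding swap_columns_def by (rule det_permute_columns)
  then show ?thesis
    by (simp add: column_equivalent_def lattice_swap_columns abs_mult sign_def)
qed

text \<open>The index type carries no order, so triangularity is taken with respect to an injective
  ranking \<open>h\<close> of the indices.\<close>

definition lower_triangular_wrt :: "('n \<Rightarrow> nat) \<Rightarrow> 'a::zero^'n^'n \<Rightarrow> bool" where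
  "lower_triangular_wrt h M \<longleftrightarrow> (\<forall>i j. h i < h j \<longrightarrow> M$i$j = 0)"

definition rows_reduced :: "('n \<Rightarrow> nat) \<Rightarrow> nat \<Rightarrow> 'a::zero^'n^'n \<Rightarrow> bool" where
  "rows_reduced h k M \<longleftrightarrow> (\<forall>i j. h i < k \<longrightarrow> h i < h j \<longrightarrow> M$i$j = 0)"

lemma rows_reduced_add_column:
  fixes M :: "'a::comm_ring_1^'n^'n"
  assumes "rows_reduced h k M" "k \<le> h j1" "k \<le> h j2"
  shows "rows_reduced h k (add_column M j1 j2 q)"
  using assms unfolding rows_reduced_def add_column_def by auto

lemma rows_reduced_swap_columns:
  assumes "rows_reduced h k M" "k \<le> h j1" "k \<le> h j2"
  shows "rows_reduced h k (swap_columns M j1 j2)"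
  using assms unfolding rows_reduced_def swap_columns_def
  by (auto simp: Transposition.transpose_def)

lemma abs_sub_sgn_mult:
  fixes a b :: int
  assumes "a \<noteq> 0" "\<bar>a\<bar> \<le> \<bar>b\<bar>"
  shows "\<bar>b + - (sgn a * sgn b) * a\<bar> = \<bar>b\<bar> - \<bar>a\<bar>"
  using assms by (cases "a > 0"; cases "b > 0") (auto simp: sgn_if)

text \<open>Euclid's algorithm on the entries of row \<open>i0\<close> that lie in columns of rank \<open>\<ge> k\<close>.\<close>

lemma reduce_row:
  fixes M :: "int^'n^'n"
  assumes "rows_reduced h k M" "h i0 = k"
  shows "\<exists>M'. column_equivalent M M' \<and> rows_reduced h k M' \<and> (\<forall>j. k < h j \<longrightarrow> M'$i0$j = 0)"
  using assms
proof (induction "\<Sum>j | k \<le> h j. nat \<bar>M$i0$j\<bar>" arbitrary: M rule: less_induct)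
  case less
  let ?S = "{j. k \<le> h j}"
  consider (two) j1 j2 where "j1 \<noteq> j2" "k \<le> h j1" "k \<le> h j2" "M$i0$j1 \<noteq> 0" "M$i0$j2 \<noteq> 0"
      "\<bar>M$i0$j1\<bar> \<le> \<bar>M$i0$j2\<bar>"
    | (one) j1 where "k \<le> h j1" "M$i0$j1 \<noteq> 0" "\<And>j. k \<le> h j \<Longrightarrow> j \<noteq> j1 \<Longrightarrow> M$i0$j = 0"
    | (none) "\<And>j. k \<le> h j \<Longrightarrow> M$i0$j = 0"
    by (metis linorder_le_cases)
  then show ?case
  proof cases
    case two
    define M' where "M' = add_column M j1 j2 (- (sgn (M$i0$j1) * sgn (M$i0$j2)))"
    have M': "column_equivalent M M'" "rows_reduced h k M'"
      unfolding M'_def using two less.prems(1)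
      by (auto intro: column_equivalent_add_column rows_reduced_add_column)
    have less_j2: "nat \<bar>M'$i0$j2\<bar> < nat \<bar>M$i0$j2\<bar>"
      using abs_sub_sgn_mult[OF two(4,6)] two(4) by (simp add: M'_def add_column_def)
    then have "nat \<bar>M'$i0$j\<bar> \<le> nat \<bar>M$i0$j\<bar>" for j
      by (cases "j = j2") (auto simp: M'_def add_column_def)
    then have "(\<Sum>j\<in>?S. nat \<bar>M'$i0$j\<bar>) < (\<Sum>j\<in>?S. nat \<bar>M$i0$j\<bar>)"
      using less_j2 two(3) by (intro sum_strict_mono_ex1) auto
    then show ?thesis
      using less.hyps[OF _ M'(2) less.prems(2)] M'(1) column_equivalent_trans by blast
  next
    case one
    define M' where "M' = swap_columns M i0 j1"
    have "column_equivalent M M'" "rows_reduced h k M'"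
      unfolding M'_def using one less.prems
      by (auto intro: column_equivalent_swap_columns rows_reduced_swap_columns)
    moreover have "M'$i0$j = 0" if "k < h j" for j
      using that one less.prems(2)
      by (auto simp: M'_def swap_columns_def Transposition.transpose_def)
    ultimately show ?thesis by blast
  next
    case none
    then show ?thesis using less.prems(1) column_equivalent_refl less_imp_le by blast
  qed
qed

lemma exists_rows_reduced:
  fixes M :: "int^'n^'n"
  assumes "inj h"
  shows "\<exists>M'. column_equivalent M M' \<and> rows_reduced h k M'"
proof (induction k)
  case 0
  show ?case using column_equivalent_refl by (auto simp: rows_reduced_def)
next
  case (Suc k)
  then obtain M1 where M1: "column_equivalent M M1" "rows_reduced h k M1" by blast
  show ?case
  proof (cases "k \<in> range h")
    case True
    then obtain i0 where i0: "h i0 = k" by auto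
    obtain M2 where M2: "column_equivalent M1 M2" "rows_reduced h k M2"
      "\<forall>j. k < h j \<longrightarrow> M2$i0$j = 0"
      using reduce_row[OF M1(2) i0] by blast
    have "rows_reduced h (Suc k) M2"
      using M2(2,3) i0 injD[OF assms] unfolding rows_reduced_def by (metis less_antisym)
    then show ?thesis using M1(1) M2(1) column_equivalent_trans by blast
  next
    case False
    then have "rows_reduced h (Suc k) M1"
      using M1(2) unfolding rows_reduced_def by (metis less_antisym rangeI)
    then show ?thesis using M1(1) by blast
  qed
qed

lemma exists_column_equivalent_lower_triangular:
  fixes M :: "int^'n^'n"
  assumes "inj h"
  shows "\<exists>M'. column_equivalent M M' \<and> lower_triangular_wrt h M'"
proof -
  have "h i < Suc (Max (range h))" for i by (simp add: le_imp_less_Suc)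
  then show ?thesis
    using exists_rows_reduced[OF assms, of M "Suc (Max (range h))"]
    unfolding rows_reduced_def lower_triangular_wrt_def by blast
qed

lemma permutation_raises_some_rank:
  fixes h :: "'n::finite \<Rightarrow> nat"
  assumes "inj h" "p permutes UNIV" "p \<noteq> id"
  shows "\<exists>i. h i < h (p i)"
proof (rule ccontr)
  assume "\<not> ?thesis"
  then have le: "h (p i) \<le> h i" for i by (simp add: not_less)
  have "sum h UNIV = sum (h \<circ> p) UNIV" by (rule sum.permute[OF assms(2)])
  then have "h (p i) = h i" for i
    using sum_strict_mono_ex1[of UNIV "h \<circ> p" h] le by (metis comp_apply finite UNIV_I
        le_neq_implies_less less_irrefl)
  then have "p = id" using injD[OF assms(1)] by auto
  then show False using assms(3) by simp
qed

lemma det_lower_triangular_wrt: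
  fixes M :: "'a::comm_ring_1^'n^'n"
  assumes "inj h" "lower_triangular_wrt h M"
  shows "det M = (\<Prod>i\<in>UNIV. M$i$i)"
proof -
  let ?f = "\<lambda>p. of_int (sign p) * (\<Prod>i\<in>UNIV. M$i$p i)"
  have "?f p = 0" if "p permutes UNIV" "p \<noteq> id" for p
    using permutation_raises_some_rank[OF assms(1) that] assms(2)
    unfolding lower_triangular_wrt_def by (metis UNIV_I finite mult_zero_right prod_zero)
  then have "det M = sum ?f {id}"
    unfolding det_def
    by (intro sum.mono_neutral_right) (auto simp: finite_permutations)
  then show ?thesis by simp
qed

definition diagonal_box :: "int^'n^'n \<Rightarrow> (int^'n) set" where
  "diagonal_box M = {v. \<forall>i. 0 \<le> v$i \<and> v$i < \<bar>M$i$i\<bar>}"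

lemma card_diagonal_box: "card (diagonal_box M) = (\<Prod>i\<in>UNIV. nat \<bar>M$i$i\<bar>)"
proof -
  have "bij_betw vec_nth (diagonal_box M) (PiE UNIV (\<lambda>i. {0..<\<bar>M$i$i\<bar>}))"
  proof (rule bij_betw_imageI)
    show "inj_on vec_nth (diagonal_box M)" by (meson inj_onI vec_nth_inject)
    show "vec_nth ` diagonal_box M = PiE UNIV (\<lambda>i. {0..<\<bar>M$i$i\<bar>})"
    proof (intro equalityI subsetI)
      fix f assume "f \<in> PiE UNIV (\<lambda>i. {0..<\<bar>M$i$i\<bar>})"
      then have "vec_lambda f \<in> diagonal_box M" "vec_nth (vec_lambda f) = f"
        unfolding diagonal_box_def by (auto simp: PiE_UNIV_domain)
      then show "f \<in> vec_nth ` diagonal_box M" by force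
    qed (auto simp: diagonal_box_def PiE_UNIV_domain)
  qed
  then show ?thesis by (simp add: bij_betw_same_card card_PiE)
qed

lemma diagonal_box_unique:
  fixes M :: "int^'n^'n"
  assumes "inj h" "lower_triangular_wrt h M" "\<And>i. M$i$i \<noteq> 0"
    and "r \<in> diagonal_box M" "r' \<in> diagonal_box M" "r - r' \<in> lattice M"
  shows "r = r'"
proof -
  obtain c where c: "r - r' = M *v c" using assms(6) unfolding lattice_def by auto
  have "c = 0"
  proof (rule ccontr)
    assume "c \<noteq> 0"
    then obtain i0 where i0: "c$i0 \<noteq> 0" and min: "\<And>j. c$j \<noteq> 0 \<Longrightarrow> h i0 \<le> h j"
      using ex_has_least_nat[of "\<lambda>i. c$i \<noteq> 0" _ h] by (auto simp: vec_eq_iff)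
    have "M$i0$j * c$j = 0" if "j \<noteq> i0" for j
      using assms(2) min[of j] injD[OF assms(1), of j i0] that
      unfolding lower_triangular_wrt_def by (metis le_neq_implies_less mult_eq_0_iff)
    then have "(r - r')$i0 = M$i0$i0 * c$i0"
      unfolding c matrix_vector_mult_def by (simp add: sum.remove[of UNIV i0] sum.neutral)
    moreover have "\<bar>M$i0$i0\<bar> \<le> \<bar>M$i0$i0 * c$i0\<bar>"
      using i0 by (simp add: abs_mult mult_le_cancel_left1) linarith
    moreover have "\<bar>(r - r')$i0\<bar> < \<bar>M$i0$i0\<bar>"
      using assms(4,5) unfolding diagonal_box_def by (smt (verit) mem_Collect_eq vector_minus_component)
    ultimately show False by simp
  qed
  then show ?thesis using c by simp
qed

lemma diagonal_box_exists:
  fixes M :: "int^'n^'n"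
  assumes "inj h" "lower_triangular_wrt h M" "\<And>i. M$i$i \<noteq> 0"
  shows "\<exists>c. v - M *v c \<in> diagonal_box M"
proof -
  have "\<exists>c. \<forall>i. h i < k \<longrightarrow> 0 \<le> (v - M *v c)$i \<and> (v - M *v c)$i < \<bar>M$i$i\<bar>" for k
  proof (induction k)
    case (Suc k)
    then obtain c where c: "\<forall>i. h i < k \<longrightarrow> 0 \<le> (v - M *v c)$i \<and> (v - M *v c)$i < \<bar>M$i$i\<bar>"
      by blast
    show ?case
    proof (cases "k \<in> range h")
      case False
      then show ?thesis using c by (metis less_SucE rangeI)
    next
      case True
      then obtain i0 where i0: "h i0 = k" by auto
      define w where "w = (v - M *v c)$i0"
      define d where "d = \<bar>M$i0$i0\<bar>"
      define q where "q = (w div d) * sgn (M$i0$i0)"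
      define c' where "c' = (\<chi> j. if j = i0 then c$i0 + q else c$j)"
      have Mc': "(M *v c')$i = (M *v c)$i + q * M$i$i0" for i
      proof -
        have "(\<Sum>j\<in>UNIV. M$i$j * c'$j) = (\<Sum>j\<in>UNIV. M$i$j * c$j + (if j = i0 then q * M$i$i0 else 0))"
          by (rule sum.cong) (auto simp: c'_def algebra_simps)
        then show ?thesis by (simp add: matrix_vector_mult_def sum.distrib)
      qed
      have "q * M$i0$i0 = (w div d) * d"
        using assms(3)[of i0] by (cases "M$i0$i0 > 0") (auto simp: q_def d_def)
      then have "(v - M *v c')$i0 = w - (w div d) * d" by (simp add: Mc' w_def)
      also have "\<dots> = w mod d" by (rule minus_div_mult_eq_mod)
      finally have "(v - M *v c')$i0 = w mod d" .
      moreover have "d > 0" using assms(3) by (simp add: d_def)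
      moreover have "M$i$i0 = 0" if "h i < k" for i
        using assms(2) that i0 unfolding lower_triangular_wrt_def by auto
      ultimately have "0 \<le> (v - M *v c')$i \<and> (v - M *v c')$i < \<bar>M$i$i\<bar>" if "h i < Suc k" for i
        using that c Mc' i0 injD[OF assms(1), of i i0] by (cases "h i < k") (auto simp: d_def)
      then show ?thesis by blast
    qed
  qed simp
  moreover have "h i < Suc (Max (range h))" for i by (simp add: le_imp_less_Suc)
  ultimately show ?thesis unfolding diagonal_box_def by blast
qed

lemma card_lattice_quotient_lower_triangular:
  fixes M :: "int^'n^'n"
  assumes "inj h" "lower_triangular_wrt h M" "det M \<noteq> 0"
  shows "card (UNIV // lattice_cong M) = nat \<bar>det M\<bar>"
proof -
  have det: "det M = (\<Prod>i\<in>UNIV. M$i$i)" by (rule det_lower_triangular_wrt[OF assms(1,2)])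
  then have diag: "M$i$i \<noteq> 0" for i using assms(3) by auto
  have "int (card (diagonal_box M)) = \<bar>det M\<bar>"
    unfolding card_diagonal_box det by (simp add: abs_prod)
  moreover have "card (UNIV // lattice_cong M) = card (diagonal_box M)"
  proof (rule card_quotient_eq_card_reps[OF equiv_lattice_cong])
    show "\<exists>r\<in>diagonal_box M. (v, r) \<in> lattice_cong M" for v
      using diagonal_box_exists[OF assms(1,2) diag, of v]
      by (force simp: lattice_cong_def lattice_def)
  qed (use diagonal_box_unique[OF assms(1,2) diag] in \<open>auto simp: lattice_cong_def\<close>)
  ultimately show ?thesis by simp
qed

theorem card_lattice_quotient:
  fixes M :: "int^'n^'n"
  assumes "det M \<noteq> 0"
  shows "card (UNIV // lattice_cong M) = nat \<bar>det M\<bar>"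
proof -
  obtain h :: "'n \<Rightarrow> nat" where h: "inj h"
    using finite_imp_inj_to_nat_seg[of "UNIV :: 'n set"] by auto
  obtain M' where "column_equivalent M M'" "lower_triangular_wrt h M'"
    using exists_column_equivalent_lower_triangular[OF h] by blast
  then show ?thesis
    using card_lattice_quotient_lower_triangular[OF h, of M'] assms
    by (auto simp: column_equivalent_def lattice_cong_def)
qed

lemma unimodular_right_inverse:
  fixes M :: "int^'n^'n"
  assumes "\<bar>det M\<bar> = 1"
  shows "\<exists>R. M ** R = mat 1"
proof -
  have "card (UNIV // lattice_cong M) = 1" using card_lattice_quotient[of M] assms by simp
  then obtain C where C: "UNIV // lattice_cong M = {C}" using card_1_singletonE by blast
  have "v \<in> lattice M" for v :: "int^'n"
  proof -
    have "lattice_cong M `` {v} = lattice_cong M `` {0}"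
      using C by (metis UNIV_I quotientI singletonD)
    then have "(v, 0) \<in> lattice_cong M" using eq_equiv_class_iff[OF equiv_lattice_cong] by blast
    then show ?thesis by (simp add: lattice_cong_def)
  qed
  then have "\<forall>j. \<exists>q. M *v q = axis j 1" unfolding lattice_def by (metis rangeE)
  then obtain q where q: "\<And>j. M *v q j = axis j 1" by metis
  have "M ** (\<chi> i j. q j $ i) = mat 1"
    using q by (simp add: matrix_matrix_mult_def matrix_vector_mult_def vec_eq_iff mat_def axis_def)
  then show ?thesis by blast
qed

lemma invertible_iff_abs_det:
  fixes M :: "int^'n^'n"
  shows "invertible M \<longleftrightarrow> \<bar>det M\<bar> = 1"
proof
  assume "invertible M"
  then obtain M' where "M ** M' = mat 1" unfolding invertible_def by blast
  then have "det M * det M' = 1" by (metis det_I det_mul)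
  then show "\<bar>det M\<bar> = 1" by (auto simp: zmult_eq_1_iff)
next
  assume det: "\<bar>det M\<bar> = 1"
  then obtain R where MR: "M ** R = mat 1" using unimodular_right_inverse by blast
  then have "det M * det R = 1" by (metis det_I det_mul)
  then have "\<bar>det R\<bar> = 1" by (auto simp: zmult_eq_1_iff)
  then obtain S where "R ** S = mat 1" using unimodular_right_inverse by blast
  then have "S = M" using MR by (metis matrix_mul_assoc matrix_mul_lid matrix_mul_rid)
  then show "invertible M" unfolding invertible_def using MR \<open>R ** S = mat 1\<close> by blast
qed

section \<open>Multiplicities of integer matrices\<close>

definition select_columns :: "'a^'n^'m \<Rightarrow> ('k \<Rightarrow> 'n) \<Rightarrow> 'a^'k^'m" where
  "select_columns X f = (\<chi> i j. X$i$(f j))"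

definition of_int_matrix :: "int^'n^'m \<Rightarrow> 'a::ring_1^'n^'m" where
  "of_int_matrix M = (\<chi> i j. of_int (M$i$j))"

lemma det_of_int_matrix: "det (of_int_matrix M :: 'a::comm_ring_1^'n^'n) = of_int (det M)"
  by (simp add: det_def of_int_matrix_def)

lemma am_rank_range_eq_rank: "am_rank X (range f) = rank (of_int_matrix (select_columns X f) :: real^_^_)"
proof -
  have "columns (of_int_matrix (select_columns X f) :: real^_^_) = real_col X ` range f"
    by (auto simp: columns_def column_def of_int_matrix_def select_columns_def real_col_def)
  then show ?thesis unfolding am_rank_def column_rank_def by simp
qed

lemma am_rank_range_eq_dim_iff:
  fixes X :: "int^'n^'d"
  shows "am_rank X (range f) = CARD('d) \<longleftrightarrow> det (select_columns X f) \<noteq> 0"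
  using rank_bound[of "of_int_matrix (select_columns X f) :: real^'d^'d"]
    det_eq_0_rank[of "of_int_matrix (select_columns X f) :: real^'d^'d"]
  by (auto simp: am_rank_range_eq_rank det_of_int_matrix)

lemma span_real_cols_eq_UNIV:
  fixes X :: "int^'n^'d" and f :: "'d \<Rightarrow> 'n"
  assumes "am_rank X (range f) = CARD('d)"
  shows "span (real_col X ` range f) = UNIV"
proof -
  let ?M = "of_int_matrix (select_columns X f) :: real^'d^'d"
  have "columns ?M = real_col X ` range f"
    by (auto simp: columns_def column_def of_int_matrix_def select_columns_def real_col_def)
  moreover have "surj ((*v) ?M)"
    using assms full_rank_surjective unfolding am_rank_range_eq_rank by blast
  ultimately show ?thesis by (metis matrix_vector_mult_in_columnspace surjD UNIV_eq_I)
qed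

lemma int_span_cols_range:
  fixes X :: "int^'n^'d"
  assumes "inj f"
  shows "int_span_cols X (range f) = lattice (select_columns X f)"
proof -
  have mult: "select_columns X f *v a = (\<Sum>j\<in>UNIV. a$j *s column (f j) X)" for a
    by (simp add: matrix_mult_sum column_def select_columns_def)
  have reindex: "(\<Sum>e\<in>range f. c e *s column e X) = (\<Sum>j\<in>UNIV. c (f j) *s column (f j) X)" for c
    using sum.reindex[of f UNIV "\<lambda>e. c e *s column e X"] assms by simp
  show ?thesis
    unfolding int_span_cols_def lattice_def
  proof (intro equalityI subsetI)
    fix v assume "v \<in> {v. \<exists>c. v = (\<Sum>e\<in>range f. c e *s column e X)}"
    then obtain c where "v = select_columns X f *v (\<chi> j. c (f j))" by (auto simp: reindex mult)
    then show "v \<in> range ((*v) (select_columns X f))" by auto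
  next
    fix v assume "v \<in> range ((*v) (select_columns X f))"
    then obtain a where "v = (\<Sum>j\<in>UNIV. a $ inv f (f j) *s column (f j) X)"
      using assms by (auto simp: mult)
    then have "v = (\<Sum>e\<in>range f. a $ inv f e *s column e X)" by (simp add: reindex)
    then show "v \<in> {v. \<exists>c. v = (\<Sum>e\<in>range f. c e *s column e X)}"
      by (intro CollectI exI[of _ "\<lambda>e. a $ inv f e"])
  qed
qed

theorem am_mult_range_eq_abs_det:
  fixes X :: "int^'n^'d"
  assumes "inj f" "det (select_columns X f) \<noteq> 0"
  shows "am_mult X (range f) = nat \<bar>det (select_columns X f)\<bar>"
proof -
  have "saturation X (range f) = UNIV"
    unfolding saturation_def
    using span_real_cols_eq_UNIV am_rank_range_eq_dim_iff assms(2) by auto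
  then have "am_mult X (range f) = card (UNIV // lattice_cong (select_columns X f))"
    unfolding am_mult_def int_span_cols_range[OF assms(1)] lattice_cong_def by simp
  then show ?thesis using card_lattice_quotient[OF assms(2)] by simp
qed

lemma same_arith_matroid_abs_det:
  fixes X X' :: "int^'n^'d"
  assumes "same_arith_matroid X X'"
  shows "\<bar>det (select_columns X f)\<bar> = \<bar>det (select_columns X' f)\<bar>"
proof (cases "inj f")
  case False
  then obtain j k where "j \<noteq> k" "f j = f k" by (auto simp: inj_def)
  then have "det (select_columns Y f) = 0" for Y :: "int^'n^'d"
    by (intro det_identical_columns[of j k]) (auto simp: column_def select_columns_def vec_eq_iff)
  then show ?thesis by simp
next
  case True
  have "am_rank X (range f) = am_rank X' (range f)" "am_mult X (range f) = am_mult X' (range f)"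
    using assms unfolding same_arith_matroid_def by auto
  then show ?thesis
    using am_rank_range_eq_dim_iff[of X f] am_rank_range_eq_dim_iff[of X' f]
      am_mult_range_eq_abs_det[OF True, of X] am_mult_range_eq_abs_det[OF True, of X']
    by (cases "det (select_columns X f) = 0") (auto simp: eq_nat_nat_iff)
qed

definition vec_gcd :: "int^'n \<Rightarrow> int" where
  "vec_gcd x = Gcd (range (vec_nth x))"

lemma vec_gcd_dvd: "vec_gcd x dvd x$i"
  unfolding vec_gcd_def by (simp add: Gcd_dvd)

lemma vec_gcd_pos: "x \<noteq> 0 \<Longrightarrow> vec_gcd x > 0"
proof -
  assume "x \<noteq> 0"
  then have "\<not> range (vec_nth x) \<subseteq> {0}" by (auto simp: vec_eq_iff)
  then show ?thesis unfolding vec_gcd_def by (metis Gcd_0_iff Gcd_int_greater_eq_0 order_le_less)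
qed

lemma bezout_Gcd_image:
  fixes x :: "'i \<Rightarrow> int"
  assumes "finite A"
  shows "\<exists>u. (\<Sum>i\<in>A. u i * x i) = Gcd (x ` A)"
  using assms
proof (induction A rule: finite_induct)
  case (insert a A)
  then obtain u where u: "(\<Sum>i\<in>A. u i * x i) = Gcd (x ` A)" by blast
  obtain s t where st: "s * x a + t * Gcd (x ` A) = gcd (x a) (Gcd (x ` A))" using bezout_int by blast
  have "(\<Sum>i\<in>A. (if i = a then s else t * u i) * x i) = (\<Sum>i\<in>A. t * (u i * x i))"
    using insert(2) by (intro sum.cong) auto
  then have "(\<Sum>i\<in>insert a A. (if i = a then s else t * u i) * x i) = s * x a + t * Gcd (x ` A)"
    using insert(1,2) by (simp add: u[symmetric] sum_distrib_left)
  then show ?case using st by (metis Gcd_insert image_insert)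
qed simp

lemma primitive_factorization:
  fixes x :: "int^'n"
  assumes "x \<noteq> 0"
  shows "\<exists>p u. x = vec_gcd x *s p \<and> (\<Sum>i\<in>UNIV. u i * p$i) = 1"
proof -
  define p where "p = (\<chi> i. x$i div vec_gcd x)"
  have x: "x = vec_gcd x *s p" by (simp add: p_def vec_eq_iff vec_gcd_dvd)
  obtain u where "(\<Sum>i\<in>UNIV. u i * x$i) = vec_gcd x"
    using bezout_Gcd_image[of UNIV "vec_nth x"] unfolding vec_gcd_def by auto
  also have "(\<Sum>i\<in>UNIV. u i * x$i) = vec_gcd x * (\<Sum>i\<in>UNIV. u i * p$i)"
    by (subst x) (simp add: sum_distrib_left algebra_simps)
  finally have "(\<Sum>i\<in>UNIV. u i * p$i) = 1" using vec_gcd_pos[OF assms] by simp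
  then show ?thesis using x by blast
qed

lemma saturation_singleton:
  fixes X :: "int^'n^'d"
  assumes x: "column b X = g *s p" and g: "g \<noteq> 0" and u: "(\<Sum>i\<in>UNIV. u i * p$i) = 1"
  shows "saturation X {b} = range (\<lambda>n. n *s p)"
proof (intro equalityI subsetI)
  have col: "real_col X b = (\<chi> i. real_of_int g * real_of_int (p$i))"
    using x by (simp add: real_col_def column_def vec_eq_iff)
  fix v assume "v \<in> saturation X {b}"
  then obtain t where "(\<chi> i. real_of_int (v$i)) = t *\<^sub>R real_col X b"
    by (auto simp: saturation_def span_singleton)
  then have vi: "real_of_int (v$i) = t * real_of_int g * real_of_int (p$i)" for i
    by (auto simp: col vec_eq_iff)
  \<comment> \<open>the coefficient \<open>t * g\<close> is the integer \<open>\<Sum> u i * v i\<close>\<close>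
  define n where "n = (\<Sum>i\<in>UNIV. u i * v$i)"
  have "real_of_int n = t * real_of_int g * real_of_int (\<Sum>i\<in>UNIV. u i * p$i)"
    by (simp add: n_def vi sum_distrib_left algebra_simps)
  then have "v = n *s p" using u vi by (simp add: vec_eq_iff) (metis of_int_eq_iff of_int_mult)
  then show "v \<in> range (\<lambda>n. n *s p)" by auto
next
  fix v assume "v \<in> range (\<lambda>n. n *s p)"
  then obtain n where v: "v = n *s p" by auto
  have "(\<chi> i. real_of_int (v$i)) = (real_of_int n / real_of_int g) *\<^sub>R real_col X b"
    using x g by (simp add: real_col_def column_def v vec_eq_iff)
  then show "v \<in> saturation X {b}"
    by (simp add: saturation_def span_singleton) (metis rangeI)
qed

lemma equiv_diff_rel:
  fixes L :: "'a::ab_group_add set"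
  assumes "0 \<in> L" "\<And>a b. a \<in> L \<Longrightarrow> b \<in> L \<Longrightarrow> a - b \<in> L"
  shows "equiv S {(v, w). v \<in> S \<and> w \<in> S \<and> v - w \<in> L}"
proof (rule equivI)
  have neg: "- a \<in> L" if "a \<in> L" for a using assms(2)[OF assms(1) that] by simp
  have add: "a + b \<in> L" if "a \<in> L" "b \<in> L" for a b using assms(2)[OF that(1) neg[OF that(2)]] by simp
  show "sym {(v, w). v \<in> S \<and> w \<in> S \<and> v - w \<in> L}"
    unfolding sym_def by (auto dest: neg)
  show "trans {(v, w). v \<in> S \<and> w \<in> S \<and> v - w \<in> L}"
    unfolding trans_def by (auto dest: add)
qed (use assms in \<open>auto intro: refl_onI\<close>)

lemma card_multiples_quotient:
  fixes p :: "int^'n" and g :: int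
  assumes "p \<noteq> 0" "g > 0"
  defines "S \<equiv> range (\<lambda>n. n *s p)" and "L \<equiv> range (\<lambda>m. (m * g) *s p)"
  shows "card (S // {(v, w). v \<in> S \<and> w \<in> S \<and> v - w \<in> L}) = nat g"
proof -
  obtain i where "p$i \<noteq> 0" using assms(1) by (auto simp: vec_eq_iff)
  then have eq: "n *s p = n' *s p \<longleftrightarrow> n = n'" for n n'
    by (metis vector_smult_component mult_cancel_right)
  have diff: "n *s p - n' *s p = (n - n') *s p" for n n' by (simp add: vec_eq_iff algebra_simps)
  have L: "n *s p - n' *s p \<in> L \<longleftrightarrow> g dvd n - n'" for n n'
  proof -
    have "n *s p - n' *s p \<in> L \<longleftrightarrow> (\<exists>m. n - n' = m * g)"
      unfolding L_def diff image_iff eq by simp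
    then show ?thesis by (metis dvd_def mult.commute)
  qed
  let ?r = "{(v, w). v \<in> S \<and> w \<in> S \<and> v - w \<in> L}"
  have "equiv S ?r"
  proof (rule equiv_diff_rel)
    show "0 \<in> L" using L[of 0 0] by simp
    show "a - b \<in> L" if ab: "a \<in> L" "b \<in> L" for a b
    proof -
      obtain m1 m2 where "a = (m1 * g) *s p" "b = (m2 * g) *s p"
        using ab unfolding L_def by auto
      then show ?thesis using L[of "m1 * g" "m2 * g"] by (simp add: left_diff_distrib)
    qed
  qed
  then have "card (S // ?r) = card ((\<lambda>n. n *s p) ` {0..<g})"
  proof (rule card_quotient_eq_card_reps)
    fix a assume "a \<in> S"
    then obtain n where a: "a = n *s p" by (auto simp: S_def)
    have "g dvd n - n mod g" by (simp add: minus_mod_eq_mult_div)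
    then have "(a, (n mod g) *s p) \<in> ?r" using L a by (auto simp: S_def)
    moreover have "(n mod g) *s p \<in> (\<lambda>n. n *s p) ` {0..<g}" using assms(2) by simp
    ultimately show "\<exists>x\<in>(\<lambda>n. n *s p) ` {0..<g}. (a, x) \<in> ?r" by blast
  next
    fix x y assume "x \<in> (\<lambda>n. n *s p) ` {0..<g}" "y \<in> (\<lambda>n. n *s p) ` {0..<g}" "(x, y) \<in> ?r"
    then obtain n n' where "x = n *s p" "y = n' *s p" "n \<in> {0..<g}" "n' \<in> {0..<g}" "g dvd n - n'"
      using L by auto
    then show "x = y" using mod_eq_dvd_iff[of n g n'] by simp
  qed (auto simp: S_def)
  also have "\<dots> = nat g" using eq by (simp add: card_image inj_on_def)
  finally show ?thesis .
qed

theorem am_mult_singleton: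
  fixes X :: "int^'n^'d"
  assumes "column b X \<noteq> 0"
  shows "am_mult X {b} = nat (vec_gcd (column b X))"
proof -
  define g where "g = vec_gcd (column b X)"
  obtain p u where x: "column b X = g *s p" and u: "(\<Sum>i\<in>UNIV. u i * p$i) = 1"
    using primitive_factorization[OF assms] unfolding g_def by blast
  have g: "g > 0" using vec_gcd_pos[OF assms] by (simp add: g_def)
  have span: "int_span_cols X {b} = range (\<lambda>m. (m * g) *s p)"
    unfolding int_span_cols_def by (auto simp: x vector_smult_assoc)
  have sat: "saturation X {b} = range (\<lambda>n. n *s p)"
    using saturation_singleton[OF x _ u] g by simp
  have "p \<noteq> 0" using assms x by auto
  then show ?thesis
    unfolding am_mult_def sat span g_def[symmetric] by (rule card_multiples_quotient[OF _ g])
qed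

section \<open>Normal form on a multiplicative basis\<close>

definition diag_matrix :: "('n \<Rightarrow> 'a::zero) \<Rightarrow> 'a^'n^'n" where
  "diag_matrix s = (\<chi> i j. if i = j then s i else 0)"

lemma diag_matrix_mult_nth: "(diag_matrix s ** Y)$i$e = s i * Y$i$e"
proof -
  have "(diag_matrix s ** Y)$i$e = (\<Sum>k\<in>UNIV. (if i = k then s i else 0) * Y$k$e)"
    by (simp add: matrix_matrix_mult_def diag_matrix_def)
  also have "\<dots> = (\<Sum>k\<in>UNIV. if k = i then s i * Y$k$e else 0)" by (intro sum.cong) auto
  also have "\<dots> = s i * Y$i$e" by simp
  finally show ?thesis .
qed

lemma mult_diag_matrix_nth: "(Y ** diag_matrix t)$i$e = Y$i$e * t e"
proof -
  have "(Y ** diag_matrix t)$i$e = (\<Sum>k\<in>UNIV. Y$i$k * (if k = e then t k else 0))"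
    by (simp add: matrix_matrix_mult_def diag_matrix_def)
  also have "\<dots> = (\<Sum>k\<in>UNIV. if k = e then Y$i$k * t k else 0)" by (intro sum.cong) auto
  also have "\<dots> = Y$i$e * t e" by simp
  finally show ?thesis .
qed

lemma select_columns_mult: "select_columns (Q ** X) h = Q ** select_columns X h"
  by (simp add: select_columns_def matrix_matrix_mult_def vec_eq_iff)

lemma select_columns_nonzero:
  fixes X :: "int^'n^'d" and f :: "'d \<Rightarrow> 'n"
  assumes "det (select_columns X f) \<noteq> 0"
  shows "column (f j) X \<noteq> 0"
proof
  assume "column (f j) X = 0"
  then have "column j (select_columns X f) = 0" by (simp add: column_def select_columns_def vec_eq_iff)
  then show False using assms det_zero_column(1)[of j "select_columns X f"] by simp
qed

text \<open>If \<open>|det X\<^sub>f|\<close> is the product of the contents of the columns, then dividing out the contents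
  leaves a unimodular matrix, so a unimodular change of coordinates makes \<open>X\<^sub>f\<close> diagonal.\<close>

lemma diagonalize_select_columns:
  fixes X :: "int^'n^'d" and f :: "'d \<Rightarrow> 'n"
  defines "g \<equiv> \<lambda>j. vec_gcd (column (f j) X)"
  assumes det: "det (select_columns X f) \<noteq> 0"
    and prod: "\<bar>det (select_columns X f)\<bar> = (\<Prod>j\<in>UNIV. g j)"
  shows "\<exists>Q. invertible Q \<and> (\<forall>i j. (Q ** X)$i$(f j) = (if i = j then g j else 0))"
proof -
  have g: "g j > 0" for j using vec_gcd_pos[OF select_columns_nonzero[OF det]] by (simp add: g_def)
  define P where "P = (\<chi> i j. X$i$(f j) div g j)"
  have XP: "X$i$(f j) = g j * P$i$j" for i j
    using vec_gcd_dvd[of "column (f j) X" i] by (simp add: P_def g_def column_def)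
  have "select_columns X f = P ** diag_matrix g"
    by (simp add: vec_eq_iff select_columns_def mult_diag_matrix_nth XP mult.commute)
  define G where "G = (\<Prod>j\<in>UNIV. g j)"
  have G: "G > 0" unfolding G_def using g by (simp add: prod_pos)
  have "det (select_columns X f) = det P * G"
    using \<open>select_columns X f = P ** diag_matrix g\<close>
    by (simp add: det_mul det_diagonal diag_matrix_def G_def)
  then have "\<bar>det P\<bar> * G = G" using prod G by (simp add: abs_mult G_def[symmetric])
  then have "\<bar>det P\<bar> = 1" using G by simp
  then obtain Q where PQ: "P ** Q = mat 1" "Q ** P = mat 1"
    using invertible_iff_abs_det unfolding invertible_def by blast
  have "(Q ** X)$i$(f j) = g j * (Q ** P)$i$j" for i j
    by (simp add: matrix_matrix_mult_def XP sum_distrib_left algebra_simps)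
  then have "(Q ** X)$i$(f j) = (if i = j then g j else 0)" for i j
    using PQ(2) by (simp add: mat_def)
  moreover have "invertible Q" unfolding invertible_def using PQ by blast
  ultimately show ?thesis by blast
qed

text \<open>The determinant of the square submatrix of \<open>A\<close> with rows \<open>I\<close>, row \<open>x\<close> being paired with
  column \<open>c x\<close>; it vanishes when \<open>c\<close> is not injective on \<open>I\<close>.\<close>

definition minor :: "('r \<Rightarrow> 'c \<Rightarrow> int) \<Rightarrow> 'r set \<Rightarrow> ('r \<Rightarrow> 'c) \<Rightarrow> int" where
  "minor A I c = (\<Sum>p | p permutes I. sign p * (\<Prod>x\<in>I. A x (c (p x))))"

lemma det_select_columns_replace:
  fixes Y :: "int^'n^'d" and f :: "'d \<Rightarrow> 'n" and g :: "'d \<Rightarrow> int"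
  assumes Yf: "\<And>i j. Y$i$(f j) = (if i = j then g j else 0)"
  shows "det (select_columns Y (\<lambda>x. if x \<in> I then c x else f x))
       = (\<Prod>x\<in>-I. g x) * minor (\<lambda>i e. Y$i$e) I c"
proof -
  let ?h = "\<lambda>x. if x \<in> I then c x else f x"
  let ?t = "\<lambda>p. of_int (sign p) * (\<Prod>x\<in>UNIV. Y$x$(?h (p x)))"
  have "?t p = 0" if p: "p permutes UNIV" "\<not> p permutes I" for p
  proof -
    obtain x where x: "x \<notin> I" "p x \<noteq> x" using p unfolding permutes_def by blast
    define z where "z = inv p x"
    have "p z = x" using p(1) by (simp add: z_def permutes_inverses(1))
    then have "Y$z$(?h (p z)) = 0" using x Yf by auto
    then have "(\<Prod>x\<in>UNIV. Y$x$(?h (p x))) = 0" by (intro prod_zero[OF finite] bexI[of _ z]) auto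
    then show ?thesis by simp
  qed
  then have "(\<Sum>p | p permutes UNIV. ?t p) = (\<Sum>p | p permutes I. ?t p)"
    by (intro sum.mono_neutral_right) (auto intro: permutes_subset simp: finite_permutations)
  then have "det (select_columns Y ?h) = (\<Sum>p | p permutes I. ?t p)"
    by (simp add: det_def select_columns_def)
  also have "\<dots> = (\<Sum>p | p permutes I. (\<Prod>x\<in>-I. g x) * (sign p * (\<Prod>x\<in>I. Y$x$(c (p x)))))"
  proof (rule sum.cong)
    fix p assume "p \<in> {p. p permutes I}"
    then have p: "p permutes I" by simp
    have "(\<Prod>x\<in>UNIV. Y$x$(?h (p x))) = (\<Prod>x\<in>I. Y$x$(?h (p x))) * (\<Prod>x\<in>-I. Y$x$(?h (p x)))"
      using prod.Int_Diff[of UNIV _ I] by (simp add: Compl_eq_Diff_UNIV)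
    also have "(\<Prod>x\<in>I. Y$x$(?h (p x))) = (\<Prod>x\<in>I. Y$x$(c (p x)))"
      using p by (intro prod.cong) (auto simp: permutes_in_image)
    also have "(\<Prod>x\<in>-I. Y$x$(?h (p x))) = (\<Prod>x\<in>-I. g x)"
      using p Yf by (intro prod.cong) (auto simp: permutes_not_in)
    finally show "?t p = (\<Prod>x\<in>-I. g x) * (sign p * (\<Prod>x\<in>I. Y$x$(c (p x))))" by simp
  qed simp
  finally show ?thesis unfolding minor_def by (simp add: sum_distrib_left)
qed

section \<open>Matrices with the same minors up to sign\<close>

text \<open>Walks in the bipartite graph of nonzero entries of \<open>A\<close>, using only the columns in \<open>F\<close>.\<close>

definition walk :: "('r \<Rightarrow> 'c \<Rightarrow> 'a::zero) \<Rightarrow> 'c set \<Rightarrow> nat \<Rightarrow> (nat \<Rightarrow> 'r) \<Rightarrow> (nat \<Rightarrow> 'c) \<Rightarrow> bool" where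
  "walk A F k r c \<longleftrightarrow> (\<forall>a<k. c a \<in> F \<and> A (r a) (c a) \<noteq> 0 \<and> A (r (Suc a)) (c a) \<noteq> 0)"

definition linked :: "('r \<Rightarrow> 'c \<Rightarrow> 'a::zero) \<Rightarrow> 'c set \<Rightarrow> 'r \<Rightarrow> 'r \<Rightarrow> bool" where
  "linked A F i j \<longleftrightarrow> (\<exists>e\<in>F. A i e \<noteq> 0 \<and> A j e \<noteq> 0)"

lemma walk_take: "walk A F k r c \<Longrightarrow> m \<le> k \<Longrightarrow> walk A F m r c"
  unfolding walk_def by auto

lemma walk_drop:
  "walk A F k r c \<Longrightarrow> m \<le> k \<Longrightarrow> walk A F (k - m) (\<lambda>a. r (a + m)) (\<lambda>a. c (a + m))"
  unfolding walk_def by auto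

lemma walk_shortcut:
  assumes w: "walk A F k r c" and uv: "Suc u < v" "v \<le> k"
    and col: "e \<in> F" "A (r u) e \<noteq> 0" "A (r v) e \<noteq> 0"
  shows "\<exists>r' c'. walk A F (Suc u + (k - v)) r' c' \<and> r' 0 = r 0 \<and> r' (Suc u + (k - v)) = r k"
proof -
  define d where "d = v - Suc u"
  define r' where "r' = (\<lambda>a. if a \<le> u then r a else r (a + d))"
  define c' where "c' = (\<lambda>a. if a < u then c a else if a = u then e else c (a + d))"
  have "walk A F (Suc u + (k - v)) r' c'"
    unfolding walk_def
  proof (intro allI impI)
    fix a assume a: "a < Suc u + (k - v)"
    consider "a < u" | "a = u" | "u < a" by linarith
    then show "c' a \<in> F \<and> A (r' a) (c' a) \<noteq> 0 \<and> A (r' (Suc a)) (c' a) \<noteq> 0"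
    proof cases
      case 3
      then have "a + d < k" using a uv by (simp add: d_def)
      then show ?thesis using 3 w unfolding walk_def r'_def c'_def by auto
    qed (use w uv col in \<open>auto simp: walk_def r'_def c'_def d_def\<close>)
  qed
  moreover have "Suc u + (k - v) + d = k" using uv by (simp add: d_def)
  then have "r' (Suc u + (k - v)) = r k" by (simp add: r'_def)
  ultimately show ?thesis by (auto simp: r'_def)
qed

lemma walk_remove_loop:
  assumes w: "walk A F k r c" and uv: "u < v" "v \<le> k" and eq: "r u = r v"
  shows "\<exists>r' c'. walk A F (u + (k - v)) r' c' \<and> r' 0 = r 0 \<and> r' (u + (k - v)) = r k"
proof -
  define d where "d = v - u"
  define r' where "r' = (\<lambda>a. if a \<le> u then r a else r (a + d))"
  define c' where "c' = (\<lambda>a. if a < u then c a else c (a + d))"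
  have r': "r' a = r (a + d)" if "u \<le> a" for a
    using that eq uv by (auto simp: r'_def d_def)
  have "walk A F (u + (k - v)) r' c'"
    unfolding walk_def
  proof (intro allI impI)
    fix a assume a: "a < u + (k - v)"
    show "c' a \<in> F \<and> A (r' a) (c' a) \<noteq> 0 \<and> A (r' (Suc a)) (c' a) \<noteq> 0"
    proof (cases "a < u")
      case False
      then have "a + d < k" using a uv by (simp add: d_def)
      then show ?thesis using w False r'[of a] r'[of "Suc a"] unfolding walk_def c'_def by auto
    qed (use w uv in \<open>auto simp: walk_def r'_def c'_def\<close>)
  qed
  moreover have "r' (u + (k - v)) = r k" using r'[of "u + (k - v)"] uv by (simp add: d_def)
  ultimately show ?thesis by (auto simp: r'_def)
qed

lemma walk_if_rtranclp_linked:
  assumes "(linked A F)\<^sup>*\<^sup>* i j"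
  shows "\<exists>k r c. walk A F k r c \<and> r 0 = i \<and> r k = j"
  using assms
proof (induction rule: rtranclp_induct)
  case base
  show ?case by (rule exI[of _ 0], rule exI[of _ "\<lambda>_. i"]) (auto simp: walk_def)
next
  case (step j l)
  then obtain k r c where w: "walk A F k r c" "r 0 = i" "r k = j" by blast
  obtain e where "e \<in> F" "A j e \<noteq> 0" "A l e \<noteq> 0" using step(2) unfolding linked_def by blast
  then have "walk A F (Suc k) (r(Suc k := l)) (c(k := e))"
    using w unfolding walk_def by (auto simp: less_Suc_eq)
  moreover have "(r(Suc k := l)) 0 = i" "(r(Suc k := l)) (Suc k) = l" using w(2) by simp_all
  ultimately show ?case by blast
qed

text \<open>A shortest walk between two rows meeting column \<open>e\<close>, closed up by \<open>e\<close>, is a cycle without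
  chords in the support of \<open>A\<close>.\<close>

locale chordless_cycle =
  fixes A :: "'r \<Rightarrow> 'c \<Rightarrow> int" and F :: "'c set" and k :: nat
    and r :: "nat \<Rightarrow> 'r" and c :: "nat \<Rightarrow> 'c" and e :: 'c
  assumes walk: "walk A F k r c" and pos: "0 < k" and inj: "inj_on r {0..k}"
    and interior: "\<And>m. 0 < m \<Longrightarrow> m < k \<Longrightarrow> A (r m) e = 0"
    and chordless: "\<And>a b. a < k \<Longrightarrow> b \<le> k \<Longrightarrow> A (r b) (c a) \<noteq> 0 \<Longrightarrow> b = a \<or> b = Suc a"
    and first: "A (r 0) e \<noteq> 0" and last: "A (r k) e \<noteq> 0"
begin

definition cycle_rows :: "'r set" where
  "cycle_rows = r ` {0..k}"

definition index :: "'r \<Rightarrow> nat" where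
  "index = the_inv_into {0..k} r"

definition next_index :: "nat \<Rightarrow> nat" where
  "next_index a = (if a = k then 0 else Suc a)"

definition cycle_succ :: "'r \<Rightarrow> 'r" where
  "cycle_succ x = (if x \<in> cycle_rows then r (next_index (index x)) else x)"

definition cycle_col :: "'r \<Rightarrow> 'c" where
  "cycle_col x = (if index x = 0 then e else c (index x - 1))"

lemma index_r: "a \<le> k \<Longrightarrow> index (r a) = a"
  unfolding index_def using the_inv_into_f_f[OF inj] by simp

lemma cycle_succ_r: "a \<le> k \<Longrightarrow> cycle_succ (r a) = r (next_index a)"
  by (simp add: cycle_succ_def cycle_rows_def index_r)

lemma cycle_col_r: "a \<le> k \<Longrightarrow> cycle_col (r a) = (if a = 0 then e else c (a - 1))"
  by (simp add: cycle_col_def index_r)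

lemma r_eq_iff: "a \<le> k \<Longrightarrow> b \<le> k \<Longrightarrow> r a = r b \<longleftrightarrow> a = b"
  using inj by (auto dest: inj_onD)

lemma cycle_rowsE:
  assumes "x \<in> cycle_rows" obtains a where "a \<le> k" "x = r a"
  using assms unfolding cycle_rows_def by auto

lemma r_in_cycle_rows: "a \<le> k \<Longrightarrow> r a \<in> cycle_rows"
  unfolding cycle_rows_def by auto

lemma finite_cycle_rows: "finite cycle_rows"
  unfolding cycle_rows_def by simp

lemma next_index_le: "a \<le> k \<Longrightarrow> next_index a \<le> k"
  using pos by (simp add: next_index_def)

lemma cycle_succ_permutes: "cycle_succ permutes cycle_rows"
proof (rule bij_imp_permutes)
  show "bij_betw cycle_succ cycle_rows cycle_rows"
  proof (rule bij_betw_imageI)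
    show "inj_on cycle_succ cycle_rows"
    proof (rule inj_onI)
      fix x y assume "x \<in> cycle_rows" "y \<in> cycle_rows" and eq: "cycle_succ x = cycle_succ y"
      then obtain a b where ab: "a \<le> k" "b \<le> k" "x = r a" "y = r b"
        by (auto simp: cycle_rows_def)
      then have "next_index a = next_index b"
        using eq by (simp add: cycle_succ_r r_eq_iff next_index_le)
      then show "x = y" using ab pos by (auto simp: next_index_def split: if_splits)
    qed
    have pre: "cycle_succ (r (if b = 0 then k else b - 1)) = r b" if "b \<le> k" for b
      using that pos by (cases b) (auto simp: cycle_succ_r next_index_def)
    have "r b \<in> cycle_succ ` cycle_rows" if "b \<le> k" for b
      using that pre[OF that] by (intro image_eqI[where x="r (if b = 0 then k else b - 1)"])
        (auto intro!: r_in_cycle_rows)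
    moreover have "cycle_succ (r a) \<in> cycle_rows" if "a \<le> k" for a
      using that by (simp add: cycle_succ_r next_index_le r_in_cycle_rows)
    ultimately show "cycle_succ ` cycle_rows = cycle_rows"
      by (auto simp: cycle_rows_def)
  qed
qed (simp add: cycle_succ_def)

lemma cycle_succ_ne_id: "cycle_succ \<noteq> id"
  using cycle_succ_r[of 0] r_eq_iff[of 0 "next_index 0"] next_index_le[of 0] pos
  by (auto simp: next_index_def)

text \<open>The only permutations of the cycle rows that avoid the zeros of \<open>A\<close> are the identity and the
  rotation along the cycle; this is where chordlessness is used.\<close>

lemma step_of_support_permutation:
  assumes p: "p permutes cycle_rows" and nz: "\<forall>x\<in>cycle_rows. A x (cycle_col (p x)) \<noteq> 0"
    and a: "a \<le> k"
  shows "p (r a) = r a \<or> p (r a) = cycle_succ (r a)"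
proof -
  have "p (r a) \<in> cycle_rows" using p r_in_cycle_rows[OF a] by (simp add: permutes_in_image)
  then obtain b where b: "b \<le> k" "p (r a) = r b" by (rule cycle_rowsE)
  have "A (r a) (cycle_col (p (r a))) \<noteq> 0" using nz r_in_cycle_rows[OF a] by blast
  then have nz_ab: "A (r a) (cycle_col (r b)) \<noteq> 0" using b(2) by simp
  show ?thesis
  proof (cases "b = 0")
    case True
    then have "A (r a) e \<noteq> 0" using nz_ab by (simp add: cycle_col_r)
    then have "a = 0 \<or> a = k" using interior[of a] a by fastforce
    then show ?thesis using True b cycle_succ_r[of k] by (auto simp: next_index_def)
  next
    case False
    then have "a = b - 1 \<or> a = b" using chordless[of "b - 1" a] b a nz_ab
      by (simp add: cycle_col_r)
    then show ?thesis using b False cycle_succ_r[OF a] by (auto simp: next_index_def)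
  qed
qed

lemma support_permutations:
  assumes p: "p permutes cycle_rows" and nz: "\<forall>x\<in>cycle_rows. A x (cycle_col (p x)) \<noteq> 0"
  shows "p = id \<or> p = cycle_succ"
proof (cases "\<forall>a\<le>k. p (r a) = r a")
  case True
  then have "p x = x" for x
    using p by (cases "x \<in> cycle_rows") (auto elim: cycle_rowsE simp: permutes_not_in)
  then show ?thesis by auto
next
  case False
  note step = step_of_support_permutation[OF p nz]
  have propagate: "p (r (next_index a)) = cycle_succ (r (next_index a))"
    if a: "a \<le> k" "p (r a) = cycle_succ (r a)" for a
  proof (rule ccontr)
    assume "\<not> ?thesis"
    then have "p (r (next_index a)) = p (r a)" using step next_index_le a cycle_succ_r by metis
    then have "r (next_index a) = r a" by (rule injD[OF permutes_inj[OF p]])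
    then show False using r_eq_iff next_index_le a(1) pos by (auto simp: next_index_def split: if_splits)
  qed
  obtain a0 where a0: "a0 \<le> k" "p (r a0) = cycle_succ (r a0)" using False step by blast
  have up: "p (r (a0 + m)) = cycle_succ (r (a0 + m))" if "a0 + m \<le> k" for m
    using that
  proof (induction m)
    case (Suc m)
    then have "next_index (a0 + m) = a0 + Suc m" by (simp add: next_index_def)
    then show ?case using propagate[of "a0 + m"] Suc by simp
  qed (use a0 in simp)
  then have "p (r k) = cycle_succ (r k)" using up[of "k - a0"] a0(1) by simp
  then have "p (r 0) = cycle_succ (r 0)" using propagate[of k] by (simp add: next_index_def)
  then have "p (r m) = cycle_succ (r m)" if "m \<le> k" for m
    using that
  proof (induction m)
    case (Suc m)
    then have "next_index m = Suc m" by (simp add: next_index_def)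
    then show ?case using propagate[of m] Suc by simp
  qed simp
  then have "p x = cycle_succ x" for x
    using p cycle_succ_permutes
    by (cases "x \<in> cycle_rows") (auto elim: cycle_rowsE simp: permutes_not_in)
  then show ?thesis by auto
qed

lemma minor_cycle:
  assumes "\<And>x y. A x y = 0 \<Longrightarrow> W x y = 0"
  shows "minor W cycle_rows cycle_col = (\<Prod>x\<in>cycle_rows. W x (cycle_col x))
           + sign cycle_succ * (\<Prod>x\<in>cycle_rows. W x (cycle_col (cycle_succ x)))"
proof -
  let ?t = "\<lambda>p. sign p * (\<Prod>x\<in>cycle_rows. W x (cycle_col (p x)))"
  have "?t p = 0" if p: "p permutes cycle_rows" "p \<noteq> id" "p \<noteq> cycle_succ" for p
  proof -
    obtain x where "x \<in> cycle_rows" "A x (cycle_col (p x)) = 0"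
      using support_permutations[OF p(1)] p(2,3) by blast
    then have "(\<Prod>x\<in>cycle_rows. W x (cycle_col (p x))) = 0"
      using assms by (intro prod_zero[OF finite_cycle_rows]) blast
    then show ?thesis by simp
  qed
  then have "minor W cycle_rows cycle_col = sum ?t {id, cycle_succ}"
    unfolding minor_def
    by (intro sum.mono_neutral_right)
      (auto simp: finite_permutations finite_cycle_rows cycle_succ_permutes)
  then show ?thesis using cycle_succ_ne_id by (simp add: sum.insert)
qed

lemma cycle_col_r0: "cycle_col (r 0) = e"
  by (simp add: cycle_col_r)

lemma cycle_succ_rk: "cycle_succ (r k) = r 0"
  by (simp add: cycle_succ_r next_index_def)

lemma cycle_col_in_F: "x \<in> cycle_rows \<Longrightarrow> x \<noteq> r 0 \<Longrightarrow> cycle_col x \<in> F"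
  using walk by (auto elim!: cycle_rowsE simp: cycle_col_r walk_def)

lemma cycle_col_succ_in_F: "x \<in> cycle_rows \<Longrightarrow> x \<noteq> r k \<Longrightarrow> cycle_col (cycle_succ x) \<in> F"
  using walk by (auto elim!: cycle_rowsE simp: cycle_col_r cycle_succ_r next_index_def walk_def)

lemma nonzero_cycle_col:
  assumes "x \<in> cycle_rows"
  shows "A x (cycle_col x) \<noteq> 0"
proof -
  obtain a where a: "a \<le> k" "x = r a" using assms by (rule cycle_rowsE)
  show ?thesis
  proof (cases a)
    case (Suc b)
    then show ?thesis using walk a by (simp add: cycle_col_r walk_def)
  qed (use a first in \<open>simp add: cycle_col_r\<close>)
qed

lemma nonzero_cycle_col_succ:
  assumes "x \<in> cycle_rows"
  shows "A x (cycle_col (cycle_succ x)) \<noteq> 0"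
proof -
  obtain a where a: "a \<le> k" "x = r a" using assms by (rule cycle_rowsE)
  show ?thesis
  proof (cases "a = k")
    case False
    then show ?thesis using walk a by (simp add: cycle_col_r cycle_succ_r next_index_def walk_def)
  qed (use a last in \<open>simp add: cycle_col_r cycle_succ_rk\<close>)
qed

end

definition sign_function :: "('a \<Rightarrow> int) \<Rightarrow> bool" where
  "sign_function s \<longleftrightarrow> (\<forall>x. s x = 1 \<or> s x = -1)"

lemma sign_function_square: "sign_function s \<Longrightarrow> s x * s x = 1"
  unfolding sign_function_def by (metis mult_1 mult_minus1 minus_minus)

lemma sign_function_mult: "sign_function s \<Longrightarrow> sign_function t \<Longrightarrow> sign_function (\<lambda>x. s x * t x)"
  unfolding sign_function_def by (metis mult_1 mult_minus1 minus_minus)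

lemma abs_prod_sign_function:
  assumes "sign_function s" "sign_function t"
  shows "\<bar>\<Prod>x\<in>I. s x * t (c x)\<bar> = 1"
proof -
  have "\<bar>s x * t (c x)\<bar> = 1" for x
    using assms unfolding sign_function_def by (metis abs_minus_cancel abs_one abs_mult mult_1)
  then show ?thesis by (simp add: abs_prod)
qed

lemma minor_singleton: "minor A {x} c = A x (c x)"
  unfolding minor_def by simp

lemma minor_rescale:
  "minor (\<lambda>x y. s x * t y * B x y) I c = (\<Prod>x\<in>I. s x * t (c x)) * minor B I c"
proof -
  have summand: "sign p * (\<Prod>x\<in>I. s x * t (c (p x)) * B x (c (p x))) =
        (\<Prod>x\<in>I. s x * t (c x)) * (sign p * (\<Prod>x\<in>I. B x (c (p x))))"
    if p: "p permutes I" for p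
  proof -
    have "(\<Prod>x\<in>I. t (c (p x))) = (\<Prod>x\<in>I. t (c x))"
      using prod.permute[OF p, of "\<lambda>x. t (c x)"] by (simp add: comp_def)
    then show ?thesis by (simp add: prod.distrib)
  qed
  have "minor (\<lambda>x y. s x * t y * B x y) I c
      = (\<Sum>p | p permutes I. (\<Prod>x\<in>I. s x * t (c x)) * (sign p * (\<Prod>x\<in>I. B x (c (p x)))))"
    unfolding minor_def by (rule sum.cong) (auto simp: summand)
  then show ?thesis unfolding minor_def by (simp add: sum_distrib_left)
qed

text \<open>Two matrices with the same minors up to sign which agree on the columns \<open>F\<close>; the column
  \<open>e\<close> is to be added to \<open>F\<close>.\<close>

locale column_extension =
  fixes A Z :: "'r \<Rightarrow> 'c \<Rightarrow> int" and F :: "'c set" and e :: 'c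
  assumes abs_minor_eq: "\<And>I c. \<bar>minor A I c\<bar> = \<bar>minor Z I c\<bar>"
    and agree: "\<And>i e'. e' \<in> F \<Longrightarrow> Z i e' = A i e'"
begin

lemma abs_eq: "\<bar>Z x y\<bar> = \<bar>A x y\<bar>"
  using abs_minor_eq[of "{x}" "\<lambda>_. y"] by (simp add: minor_singleton)

definition flip :: "'r \<Rightarrow> int" where
  "flip i = (if Z i e = A i e then 1 else -1)"

lemma Z_e: "Z i e = flip i * A i e"
  using abs_eq[of i e] unfolding flip_def by (auto simp: abs_eq_iff)

lemma sign_function_flip: "sign_function flip"
  by (simp add: sign_function_def flip_def)

definition bad_walk :: "nat \<Rightarrow> (nat \<Rightarrow> 'r) \<Rightarrow> (nat \<Rightarrow> 'c) \<Rightarrow> bool" where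
  "bad_walk k r c \<longleftrightarrow> walk A F k r c \<and> A (r 0) e \<noteq> 0 \<and> A (r k) e \<noteq> 0 \<and> flip (r 0) \<noteq> flip (r k)"

text \<open>On a chordless cycle through \<open>e\<close> the minor has exactly two terms, and a flip of sign between
  the two rows meeting \<open>e\<close> turns their sum into their difference.\<close>

lemma chordless_cycle_flip_eq:
  assumes "chordless_cycle A F k r c e"
  shows "flip (r 0) = flip (r k)"
proof (rule ccontr)
  assume flip: "flip (r 0) \<noteq> flip (r k)"
  interpret C: chordless_cycle A F k r c e by fact
  define s where "s = sign C.cycle_succ"
  define P where "P = (\<Prod>x\<in>C.cycle_rows. A x (C.cycle_col x))"
  define Q where "Q = (\<Prod>x\<in>C.cycle_rows. A x (C.cycle_col (C.cycle_succ x)))"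
  have "A x y = 0 \<Longrightarrow> Z x y = 0" for x y using abs_eq[of x y] by simp
  then have minor_Z: "minor Z C.cycle_rows C.cycle_col = (\<Prod>x\<in>C.cycle_rows. Z x (C.cycle_col x))
      + s * (\<Prod>x\<in>C.cycle_rows. Z x (C.cycle_col (C.cycle_succ x)))"
    unfolding s_def by (rule C.minor_cycle)
  note remove = prod.remove[OF C.finite_cycle_rows C.r_in_cycle_rows]
  have "(\<Prod>x\<in>C.cycle_rows. Z x (C.cycle_col x))
      = Z (r 0) (C.cycle_col (r 0)) * (\<Prod>x\<in>C.cycle_rows - {r 0}. Z x (C.cycle_col x))"
    by (rule remove) simp
  also have "(\<Prod>x\<in>C.cycle_rows - {r 0}. Z x (C.cycle_col x))
      = (\<Prod>x\<in>C.cycle_rows - {r 0}. A x (C.cycle_col x))"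
    using C.cycle_col_in_F agree by (intro prod.cong) auto
  finally have Z_P: "(\<Prod>x\<in>C.cycle_rows. Z x (C.cycle_col x)) = flip (r 0) * P"
    unfolding P_def using remove[of 0 "\<lambda>x. A x (C.cycle_col x)"] by (simp add: C.cycle_col_r0 Z_e)
  have "(\<Prod>x\<in>C.cycle_rows. Z x (C.cycle_col (C.cycle_succ x)))
      = Z (r k) (C.cycle_col (C.cycle_succ (r k)))
        * (\<Prod>x\<in>C.cycle_rows - {r k}. Z x (C.cycle_col (C.cycle_succ x)))"
    by (rule remove) simp
  moreover have "(\<Prod>x\<in>C.cycle_rows - {r k}. Z x (C.cycle_col (C.cycle_succ x)))
      = (\<Prod>x\<in>C.cycle_rows - {r k}. A x (C.cycle_col (C.cycle_succ x)))"
    using C.cycle_col_succ_in_F agree by (intro prod.cong) auto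
  ultimately have Z_Q: "(\<Prod>x\<in>C.cycle_rows. Z x (C.cycle_col (C.cycle_succ x))) = flip (r k) * Q"
    unfolding Q_def using remove[of k "\<lambda>x. A x (C.cycle_col (C.cycle_succ x))"]
    by (simp add: C.cycle_succ_rk C.cycle_col_r0 Z_e)
  have "flip (r k) = - flip (r 0)" using flip by (auto simp: flip_def split: if_splits)
  then have "minor Z C.cycle_rows C.cycle_col = flip (r 0) * (P - s * Q)"
    using minor_Z Z_P Z_Q by (simp add: algebra_simps)
  moreover have "minor A C.cycle_rows C.cycle_col = P + s * Q"
    unfolding s_def P_def Q_def by (rule C.minor_cycle)
  moreover have "\<bar>flip (r 0)\<bar> = 1" by (simp add: flip_def)
  ultimately have "\<bar>P + s * Q\<bar> = \<bar>P - s * Q\<bar>"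
    using abs_minor_eq[of C.cycle_rows C.cycle_col] by (simp add: abs_mult)
  moreover have "P \<noteq> 0" "Q \<noteq> 0" "s \<noteq> 0"
    using C.nonzero_cycle_col C.nonzero_cycle_col_succ C.finite_cycle_rows
    by (auto simp: P_def Q_def s_def sign_def)
  ultimately show False by (auto simp: abs_eq_iff)
qed

definition minimal_bad_walk :: "nat \<Rightarrow> (nat \<Rightarrow> 'r) \<Rightarrow> (nat \<Rightarrow> 'c) \<Rightarrow> bool" where
  "minimal_bad_walk k r c \<longleftrightarrow> bad_walk k r c \<and> (\<forall>k' r' c'. k' < k \<longrightarrow> \<not> bad_walk k' r' c')"

lemma bad_walk_same_ends:
  "bad_walk k r c \<Longrightarrow> walk A F k' r' c' \<Longrightarrow> r' 0 = r 0 \<Longrightarrow> r' k' = r k \<Longrightarrow> bad_walk k' r' c'"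
  unfolding bad_walk_def by simp

lemma minimal_bad_walk_interior:
  assumes "minimal_bad_walk k r c" "0 < m" "m < k"
  shows "A (r m) e = 0"
proof (rule ccontr)
  assume nz: "A (r m) e \<noteq> 0"
  have b: "walk A F k r c" "A (r 0) e \<noteq> 0" "A (r k) e \<noteq> 0" "flip (r 0) \<noteq> flip (r k)"
    and min: "\<And>k' r' c'. k' < k \<Longrightarrow> \<not> bad_walk k' r' c'"
    using assms(1) unfolding minimal_bad_walk_def bad_walk_def by auto
  show False
  proof (cases "flip (r 0) = flip (r m)")
    case True
    then have "bad_walk (k - m) (\<lambda>a. r (a + m)) (\<lambda>a. c (a + m))"
      using walk_drop[OF b(1), of m] assms(3) nz b(3,4) unfolding bad_walk_def by auto
    moreover have "k - m < k" using assms(2,3) by simp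
    ultimately show False using min by blast
  next
    case False
    then have "bad_walk m r c" using walk_take[OF b(1)] assms(3) nz b(2) unfolding bad_walk_def by auto
    then show False using min assms(3) by blast
  qed
qed

lemma minimal_bad_walk_chordless:
  assumes "minimal_bad_walk k r c" "a < k" "b \<le> k" "A (r b) (c a) \<noteq> 0"
  shows "b = a \<or> b = Suc a"
proof (rule ccontr)
  assume ab: "\<not> (b = a \<or> b = Suc a)"
  have b: "bad_walk k r c" and w: "walk A F k r c"
    and min: "\<And>k' r' c'. k' < k \<Longrightarrow> \<not> bad_walk k' r' c'"
    using assms(1) unfolding minimal_bad_walk_def bad_walk_def by auto
  have ca: "c a \<in> F" "A (r a) (c a) \<noteq> 0" "A (r (Suc a)) (c a) \<noteq> 0"
    using w assms(2) unfolding walk_def by auto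
  consider "Suc b < Suc a" | "Suc a < b" using ab by linarith
  then obtain k' r' c' where "k' < k" "walk A F k' r' c'" "r' 0 = r 0" "r' k' = r k"
  proof cases
    case 1
    then show ?thesis
      using walk_shortcut[OF w _ _ ca(1) assms(4) ca(3)] assms(2) that[of "Suc b + (k - Suc a)"] by auto
  next
    case 2
    then show ?thesis
      using walk_shortcut[OF w _ assms(3) ca(1) ca(2) assms(4)] assms(3) that[of "Suc a + (k - b)"]
      by auto
  qed
  then show False using min bad_walk_same_ends[OF b] by blast
qed

lemma minimal_bad_walk_inj:
  assumes "minimal_bad_walk k r c"
  shows "inj_on r {0..k}"
proof (rule inj_onI, rule ccontr)
  fix a b assume ab: "a \<in> {0..k}" "b \<in> {0..k}" "r a = r b" "a \<noteq> b"
  have b: "bad_walk k r c" and w: "walk A F k r c"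
    and min: "\<And>k' r' c'. k' < k \<Longrightarrow> \<not> bad_walk k' r' c'"
    using assms unfolding minimal_bad_walk_def bad_walk_def by auto
  have shorter: "\<exists>k' r' c'. k' < k \<and> walk A F k' r' c' \<and> r' 0 = r 0 \<and> r' k' = r k"
    if "u < v" "v \<le> k" "r u = r v" for u v
    using walk_remove_loop[OF w that] that by (intro exI[of _ "u + (k - v)"]) auto
  have "a < b \<or> b < a" using ab(4) by linarith
  then obtain k' r' c' where "k' < k" "walk A F k' r' c'" "r' 0 = r 0" "r' k' = r k"
    using shorter[of a b] shorter[of b a] ab(1-3) by auto
  then show False using min bad_walk_same_ends[OF b] by blast
qed

lemma minimal_bad_walk_chordless_cycle:
  assumes "minimal_bad_walk k r c"
  shows "chordless_cycle A F k r c e"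
proof
  have b: "bad_walk k r c" using assms unfolding minimal_bad_walk_def by blast
  then show "walk A F k r c" "A (r 0) e \<noteq> 0" "A (r k) e \<noteq> 0"
    unfolding bad_walk_def by auto
  show "0 < k" using b unfolding bad_walk_def by (cases k) auto
qed (use minimal_bad_walk_interior minimal_bad_walk_chordless minimal_bad_walk_inj assms in auto)

lemma flip_eq_if_linked:
  assumes "(linked A F)\<^sup>*\<^sup>* i j" "A i e \<noteq> 0" "A j e \<noteq> 0"
  shows "flip i = flip j"
proof (rule ccontr)
  assume "flip i \<noteq> flip j"
  moreover obtain k r c where "walk A F k r c" "r 0 = i" "r k = j"
    using walk_if_rtranclp_linked[OF assms(1)] by blast
  ultimately have ex: "\<exists>k r c. bad_walk k r c" using assms(2,3) unfolding bad_walk_def by blast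
  define k0 where "k0 = (LEAST k. \<exists>r c. bad_walk k r c)"
  obtain r c where "bad_walk k0 r c" using LeastI_ex[OF ex] unfolding k0_def by blast
  moreover have "\<not> bad_walk k' r' c'" if "k' < k0" for k' r' c'
    using not_less_Least[OF that[unfolded k0_def]] by blast
  ultimately have "minimal_bad_walk k0 r c" unfolding minimal_bad_walk_def by blast
  then show False
    using chordless_cycle_flip_eq[OF minimal_bad_walk_chordless_cycle]
    unfolding minimal_bad_walk_def bad_walk_def by blast
qed

lemma exists_row_signs:
  "\<exists>\<sigma>. sign_function \<sigma> \<and> (\<forall>i j. linked A F i j \<longrightarrow> \<sigma> i = \<sigma> j) \<and> (\<forall>i. A i e \<noteq> 0 \<longrightarrow> \<sigma> i = flip i)"
proof -
  let ?conn = "(linked A F)\<^sup>*\<^sup>*"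
  have sym: "?conn j i" if "?conn i j" for i j
    using that by (induction rule: rtranclp_induct)
      (auto simp: linked_def intro: converse_rtranclp_into_rtranclp)
  define R where "R i = {x. A x e \<noteq> 0 \<and> ?conn i x}" for i
  define \<sigma> where "\<sigma> i = (if R i = {} then 1 else flip (SOME x. x \<in> R i))" for i
  have "R i = R j" if "linked A F i j" for i j
    using that sym unfolding R_def by (auto intro: rtranclp_trans)
  then have "\<forall>i j. linked A F i j \<longrightarrow> \<sigma> i = \<sigma> j" by (simp add: \<sigma>_def)
  moreover have "\<sigma> i = flip i" if "A i e \<noteq> 0" for i
  proof -
    have "i \<in> R i" using that by (simp add: R_def)
    then have "(SOME x. x \<in> R i) \<in> R i" by (rule someI)
    then show ?thesis
      using flip_eq_if_linked[of i "SOME x. x \<in> R i"] that \<open>i \<in> R i\<close>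
      by (auto simp: \<sigma>_def R_def)
  qed
  moreover have "sign_function \<sigma>" using sign_function_flip by (simp add: sign_function_def \<sigma>_def)
  ultimately show ?thesis by blast
qed

lemma extend_signs:
  assumes "e \<notin> F"
  shows "\<exists>\<sigma> \<tau>. sign_function \<sigma> \<and> sign_function \<tau>
           \<and> (\<forall>i. \<forall>e'\<in>insert e F. Z i e' = \<sigma> i * \<tau> e' * A i e')"
proof -
  obtain \<sigma> where \<sigma>: "sign_function \<sigma>" "\<And>i j. linked A F i j \<Longrightarrow> \<sigma> i = \<sigma> j"
    "\<And>i. A i e \<noteq> 0 \<Longrightarrow> \<sigma> i = flip i"
    using exists_row_signs by blast
  define \<tau> where "\<tau> e' = (if e' \<in> F \<and> (\<exists>i. A i e' \<noteq> 0) then \<sigma> (SOME i. A i e' \<noteq> 0) else 1)" for e'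
  have "sign_function \<tau>" using \<sigma>(1) by (simp add: sign_function_def \<tau>_def)
  moreover have \<tau>_e: "\<tau> e = 1" using assms by (simp add: \<tau>_def)
  moreover have \<tau>_F: "\<tau> e' = \<sigma> i" if "e' \<in> F" "A i e' \<noteq> 0" for i e'
  proof -
    have "A (SOME i. A i e' \<noteq> 0) e' \<noteq> 0" using that(2) by (rule someI)
    then have "linked A F (SOME i. A i e' \<noteq> 0) i" using that by (auto simp: linked_def)
    then show ?thesis using that \<sigma>(2) by (auto simp: \<tau>_def)
  qed
  moreover have "Z i e' = \<sigma> i * \<tau> e' * A i e'" if "e' \<in> insert e F" for i e'
    using that \<tau>_e \<tau>_F \<sigma>(3) sign_function_square[OF \<sigma>(1)] abs_eq[of i e'] agree
    by (cases "A i e' = 0") (auto simp: Z_e)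
  ultimately show ?thesis using \<sigma>(1) by blast
qed

end

lemma signs_insert_column:
  fixes A B :: "'r \<Rightarrow> 'c \<Rightarrow> int"
  assumes abs_minor_eq: "\<And>I c. \<bar>minor A I c\<bar> = \<bar>minor B I c\<bar>"
    and s: "sign_function s" and t: "sign_function t"
    and F: "\<And>i e'. e' \<in> F \<Longrightarrow> B i e' = s i * t e' * A i e'" and "e \<notin> F"
  shows "\<exists>s' t'. sign_function s' \<and> sign_function t'
    \<and> (\<forall>i. \<forall>e'\<in>insert e F. B i e' = s' i * t' e' * A i e')"
proof -
  define Z where "Z x y = s x * t y * B x y" for x y
  have B: "B x y = s x * t y * Z x y" for x y
    using sign_function_square[OF s, of x] sign_function_square[OF t, of y]
    by (simp add: Z_def algebra_simps)
  have "column_extension A Z F"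
  proof
    show "Z i e' = A i e'" if "e' \<in> F" for i e'
    proof -
      have "Z i e' = (s i * s i) * (t e' * t e') * A i e'"
        by (simp add: Z_def F[OF that] algebra_simps)
      then show ?thesis using sign_function_square[OF s] sign_function_square[OF t] by simp
    qed
    have "\<bar>minor Z I c\<bar> = \<bar>minor B I c\<bar>" for I c
      using abs_prod_sign_function[OF s t] unfolding Z_def by (simp add: minor_rescale abs_mult)
    then show "\<bar>minor A I c\<bar> = \<bar>minor Z I c\<bar>" for I c
      using abs_minor_eq by simp
  qed
  then obtain \<sigma> \<tau> where \<sigma>\<tau>: "sign_function \<sigma>" "sign_function \<tau>"
    "\<And>i e'. e' \<in> insert e F \<Longrightarrow> Z i e' = \<sigma> i * \<tau> e' * A i e'"
    using column_extension.extend_signs[OF _ \<open>e \<notin> F\<close>, of A Z] by blast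
  then have "B i e' = (s i * \<sigma> i) * (t e' * \<tau> e') * A i e'" if "e' \<in> insert e F" for i e'
    using that B by (simp add: algebra_simps)
  moreover have "sign_function (\<lambda>i. s i * \<sigma> i)" "sign_function (\<lambda>e'. t e' * \<tau> e')"
    using sign_function_mult s t \<sigma>\<tau>(1,2) by blast+
  ultimately show ?thesis by blast
qed

theorem sign_equivalent_if_abs_minors_eq:
  fixes A B :: "'r \<Rightarrow> 'c::finite \<Rightarrow> int"
  assumes "\<And>I c. \<bar>minor A I c\<bar> = \<bar>minor B I c\<bar>"
  shows "\<exists>s t. sign_function s \<and> sign_function t \<and> (\<forall>i e. B i e = s i * t e * A i e)"
proof -
  have "\<exists>s t. sign_function s \<and> sign_function t \<and> (\<forall>i. \<forall>e\<in>F. B i e = s i * t e * A i e)"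
    if "finite F" for F :: "'c set"
    using that
  proof (induction F rule: finite_induct)
    case empty
    show ?case by (rule exI[of _ "\<lambda>_. 1"], rule exI[of _ "\<lambda>_. 1"]) (simp add: sign_function_def)
  next
    case (insert e F)
    then show ?case using signs_insert_column[OF assms] by blast
  qed
  from this[of UNIV] show ?thesis by auto
qed

section \<open>Matrices representing the same arithmetic matroid\<close>

lemma multiplicative_basis_select_columns:
  fixes X :: "int^'n^'d"
  assumes "multiplicative_basis X B" "am_rank X UNIV = CARD('d)"
  obtains f :: "'d \<Rightarrow> 'n" where "det (select_columns X f) \<noteq> 0"
    "\<bar>det (select_columns X f)\<bar> = (\<Prod>j\<in>UNIV. vec_gcd (column (f j) X))"
proof -
  have rank: "am_rank X B = card B" "am_rank X B = CARD('d)"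
    and mult: "am_mult X B = (\<Prod>x\<in>B. am_mult X {x})"
    using assms unfolding multiplicative_basis_def am_basis_def by auto
  then obtain f :: "'d \<Rightarrow> 'n" where f: "bij_betw f UNIV B"
    using finite_same_card_bij[of "UNIV :: 'd set" B] by auto
  then have inj: "inj f" and range: "range f = B" by (auto simp: bij_betw_def)
  then have det: "det (select_columns X f) \<noteq> 0" using am_rank_range_eq_dim_iff rank by metis
  have "nat \<bar>det (select_columns X f)\<bar> = (\<Prod>j\<in>UNIV. am_mult X {f j})"
    using mult am_mult_range_eq_abs_det[OF inj det] prod.reindex_bij_betw[OF f, of "\<lambda>x. am_mult X {x}"]
    by (simp add: range)
  also have "\<dots> = (\<Prod>j\<in>UNIV. nat (vec_gcd (column (f j) X)))"
    using am_mult_singleton[OF select_columns_nonzero[OF det]] by simp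
  finally have "int (nat \<bar>det (select_columns X f)\<bar>) = (\<Prod>j\<in>UNIV. int (nat (vec_gcd (column (f j) X))))"
    by (simp only: of_nat_prod)
  then have "\<bar>det (select_columns X f)\<bar> = (\<Prod>j\<in>UNIV. vec_gcd (column (f j) X))"
    using vec_gcd_pos[OF select_columns_nonzero[OF det]] by (simp add: less_imp_le)
  then show ?thesis using that det by blast
qed

lemma same_arith_matroid_vec_gcd:
  fixes X X' :: "int^'n^'d"
  assumes "same_arith_matroid X X'" "column b X \<noteq> 0" "column b X' \<noteq> 0"
  shows "vec_gcd (column b X') = vec_gcd (column b X)"
  using assms am_mult_singleton[OF assms(2)] am_mult_singleton[OF assms(3)]
    vec_gcd_pos[OF assms(2)] vec_gcd_pos[OF assms(3)]
  unfolding same_arith_matroid_def by (metis eq_nat_nat_iff less_imp_le)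

lemma same_arith_matroid_diagonal_forms:
  fixes X X' :: "int^'n^'d"
  assumes "same_arith_matroid X X'" "am_rank X UNIV = CARD('d)" "weakly_multiplicative X"
  obtains Q Q' :: "int^'d^'d" and g :: "'d \<Rightarrow> int" and f :: "'d \<Rightarrow> 'n"
  where "invertible Q" "invertible Q'" "\<And>j. g j \<noteq> 0"
    "\<And>i j. (Q ** X)$i$(f j) = (if i = j then g j else 0)"
    "\<And>i j. (Q' ** X')$i$(f j) = (if i = j then g j else 0)"
proof -
  obtain B where "multiplicative_basis X B"
    using assms(3) unfolding weakly_multiplicative_def by blast
  then obtain f :: "'d \<Rightarrow> 'n" where f: "det (select_columns X f) \<noteq> 0"
    "\<bar>det (select_columns X f)\<bar> = (\<Prod>j\<in>UNIV. vec_gcd (column (f j) X))"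
    using multiplicative_basis_select_columns assms(2) by metis
  note same_det = same_arith_matroid_abs_det[OF assms(1), of f]
  have det': "det (select_columns X' f) \<noteq> 0" using f(1) same_det by auto
  have gcd': "vec_gcd (column (f j) X') = vec_gcd (column (f j) X)" for j
    using same_arith_matroid_vec_gcd[OF assms(1) select_columns_nonzero[OF f(1)]
        select_columns_nonzero[OF det']] .
  obtain Q where Q: "invertible Q"
    "\<And>i j. (Q ** X)$i$(f j) = (if i = j then vec_gcd (column (f j) X) else 0)"
    using diagonalize_select_columns[OF f] by blast
  have "\<bar>det (select_columns X' f)\<bar> = (\<Prod>j\<in>UNIV. vec_gcd (column (f j) X'))"
    using f(2) same_det by (simp add: gcd')
  then obtain Q' where Q': "invertible Q'"
    "\<And>i j. (Q' ** X')$i$(f j) = (if i = j then vec_gcd (column (f j) X) else 0)"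
    using diagonalize_select_columns[OF det'] unfolding gcd' by blast
  have "vec_gcd (column (f j) X) \<noteq> 0" for j
    using vec_gcd_pos[OF select_columns_nonzero[OF f(1)], of j] by simp
  then show ?thesis by (rule that[OF Q(1) Q'(1) _ Q(2) Q'(2)])
qed

lemma abs_det_select_columns_mult_invertible:
  fixes Q :: "int^'d^'d"
  shows "invertible Q \<Longrightarrow> \<bar>det (select_columns (Q ** X) h)\<bar> = \<bar>det (select_columns X h)\<bar>"
  by (simp add: select_columns_mult det_mul abs_mult invertible_iff_abs_det)

lemma abs_minor_eq_if_diagonal:
  fixes Y Y' :: "int^'n^'d"
  assumes "\<And>h. \<bar>det (select_columns Y h)\<bar> = \<bar>det (select_columns Y' h)\<bar>"
    and "\<And>i j. Y$i$(f j) = (if i = j then g j else 0)"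
    and "\<And>i j. Y'$i$(f j) = (if i = j then g j else 0)"
    and "\<And>j. g j \<noteq> 0"
  shows "\<bar>minor (\<lambda>i e. Y$i$e) I c\<bar> = \<bar>minor (\<lambda>i e. Y'$i$e) I c\<bar>"
proof -
  have "(\<Prod>x\<in>-I. g x) \<noteq> 0" using assms(4) by simp
  then show ?thesis
    using assms(1)[of "\<lambda>x. if x \<in> I then c x else f x"]
      det_select_columns_replace[of Y f g I c, OF assms(2)]
      det_select_columns_replace[of Y' f g I c, OF assms(3)]
    by (simp add: abs_mult)
qed

lemma diag_matrix_mult_mult_nth:
  fixes Y :: "'a::comm_semiring_1^'n^'m"
  shows "(diag_matrix s ** Y ** diag_matrix t)$i$e = s i * t e * Y$i$e"
  by (simp add: mult_diag_matrix_nth diag_matrix_mult_nth mult.assoc mult.commute[of "t e"])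

lemma invertible_diag_matrix:
  assumes "sign_function s"
  shows "invertible (diag_matrix s)"
proof -
  have "diag_matrix s ** diag_matrix s = mat 1"
    using sign_function_square[OF assms]
    by (simp add: vec_eq_iff mat_def diag_matrix_mult_nth) (simp add: diag_matrix_def)
  then show ?thesis unfolding invertible_def by blast
qed

lemma eq_invertible_mult_diag_matrix:
  fixes Q Q' :: "int^'d^'d" and X X' :: "int^'n^'d"
  assumes "invertible Q" "invertible Q'" "sign_function s"
    and "\<And>i e. (Q' ** X')$i$e = s i * t e * (Q ** X)$i$e"
  shows "\<exists>T. invertible T \<and> X' = T ** X ** diag_matrix t"
proof -
  obtain P' where P': "P' ** Q' = mat 1" "Q' ** P' = mat 1"
    using assms(2) unfolding invertible_def by blast
  have "X' = P' ** (Q' ** X')" by (simp add: matrix_mul_assoc P'(1))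
  also have "Q' ** X' = diag_matrix s ** (Q ** X) ** diag_matrix t"
    using assms(4) by (simp add: vec_eq_iff diag_matrix_mult_mult_nth)
  finally have "X' = (P' ** diag_matrix s ** Q) ** X ** diag_matrix t" by (simp add: matrix_mul_assoc)
  moreover have "invertible P'" using P' unfolding invertible_def by blast
  then have "invertible (P' ** diag_matrix s ** Q)"
    using assms(1) invertible_diag_matrix[OF assms(3)] by (intro invertible_mult)
  ultimately show ?thesis by blast
qed

theorem theorem1p1:
  fixes X X' :: "int^'n^'d"
  assumes "CARD('d) \<le> CARD('n)"
    and "am_rank X UNIV = CARD('d)"
    and "am_rank X' UNIV = CARD('d)"
    and "same_arith_matroid X X'"
    and "weakly_multiplicative X"
  shows "\<exists>(T :: int^'d^'d) (D :: int^'n^'n).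
           invertible T
         \<and> (\<forall>i j. i \<noteq> j \<longrightarrow> D $ i $ j = 0)
         \<and> (\<forall>i. D $ i $ i = 1 \<or> D $ i $ i = -1)
         \<and> X' = T ** X ** D"
proof -
  obtain Q Q' :: "int^'d^'d" and g f where Q: "invertible Q" "invertible Q'" "\<And>j. g j \<noteq> 0"
    "\<And>i j. (Q ** X)$i$(f j) = (if i = j then g j else 0)"
    "\<And>i j. (Q' ** X')$i$(f j) = (if i = j then g j else 0)"
    by (rule same_arith_matroid_diagonal_forms[OF assms(4,2,5)], rule that)
  have "\<bar>det (select_columns (Q ** X) h)\<bar> = \<bar>det (select_columns (Q' ** X') h)\<bar>" for h
    using abs_det_select_columns_mult_invertible[OF Q(1), of X h]
      abs_det_select_columns_mult_invertible[OF Q(2), of X' h]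
      same_arith_matroid_abs_det[OF assms(4), of h] by simp
  then have "\<bar>minor (\<lambda>i e. (Q ** X)$i$e) I c\<bar> = \<bar>minor (\<lambda>i e. (Q' ** X')$i$e) I c\<bar>" for I c
    by (rule abs_minor_eq_if_diagonal[OF _ Q(4,5,3)])
  then obtain s t where st: "sign_function s" "sign_function t"
    "\<And>i e. (Q' ** X')$i$e = s i * t e * (Q ** X)$i$e"
    using sign_equivalent_if_abs_minors_eq by blast
  then obtain T where "invertible T" "X' = T ** X ** diag_matrix t"
    using eq_invertible_mult_diag_matrix[OF Q(1,2) st(1,3)] by blast
  then show ?thesis
    using st(2) unfolding sign_function_def by (intro exI[of _ T] exI[of _ "diag_matrix t"])
      (simp add: diag_matrix_def)
qed

end
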